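(* Let $\mathcal{H}$ be a Hilbert space, let $t\mapsto H(t)$ be a strongly continuous map from $\mathbb{R}$ into the bounded self-adjoint operators on $\mathcal{H}$, let $P$ be an orthogonal projection on $\mathcal{H}$ and $Q=1-P$. Fix $t_0\in\mathbb{R}$. Let $T$ be a tree with $|T|>1$ and write $T=T_1\vee T_2$. Then, for all $t$: (a) if $T_1=|$ (so $T_2\neq |$), $\Omega_T(t,t_0)=-\imath\int_{t_0}^t \mathrm{d}s\, Q H(s)\,\Omega_{T_2}(s,t_0)$; (b) if $T_2=|$ (so $T_1\neq |$), $\Omega_T(t,t_0)=\imath\int_{t_0}^t \mathrm{d}s\, \Omega_{T_1}(s,t_0) H(s) P$; (c) if $T_1\neq |$ and $T_2\neq |$, $\Omega_T(t,t_0)=\imath\int_{t_0}^t \mathrm{d}s\, \Omega_{T_1}(s,t_0) H(s)\,\Omega_{T_2}(s,t_0)$.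
   Context: Trees: let $|$ denote the empty tree. Define sets $Y_n$ recursively by $Y_0=\{|\}$ and, for $n>0$, $Y_n=\{T_1\vee T_2: T_1\in Y_k,\ T_2\in Y_{n-k-1},\ k=0,\dots,n-1\}$, where $T_1\vee T_2$ is a formal grafting (an ordered pair, with $T_1\vee T_2=T_1'\vee T_2'$ iff $T_1=T_1'$ and $T_2=T_2'$). A tree is an element of some $Y_n$, and $|T|:=n$ for $T\in Y_n$ (the number of vertices). Every tree $T\neq|$ is uniquely of the form $T_1\vee T_2$, and $|T_1\vee T_2|=|T_1|+|T_2|+1$. For a tuple $I$ of distinct integers define $\phi(I)$ recursively by $\phi(\emptyset)=|$ and otherwise $\phi(I)=\phi(I_1)\vee\phi(I_2)$, where $I=I_1\cdot(\min I)\cdot I_2$ ($\cdot$ is concatenation of tuples; $I_1$ or $I_2$ may be empty). For a tree $T$ with $|T|=n\ge1$ let $S_T=\{\sigma\in\mathcal{S}_n:\phi(\sigma(1),\dots,\sigma(n))=T\}$, $\mathcal{S}_n$ the symmetric group. For $\sigma\in\mathcal{S}_n$ define operator-valued factors $X^\sigma_p(s)$, $p=1,\dots,n$: if $n=1$, $X^\sigma_1(s)=-\imath QH(s)P$. If $n>1$: $X^\sigma_1(s)=-\imath QH(s)$; for $1<p<n$, $X^\sigma_p(s)=-\imath QH(s)$ if $\sigma(p)>\sigma(p-1)$ and $X^\sigma_p(s)=\imath PH(s)$ if $\sigma(p)<\sigma(p-1)$; $X^\sigma_n(s)=-\imath QH(s)P$ if $\sigma(n)>\sigma(n-1)$ and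 $X^\sigma_n(s)=\imath PH(s)P$ if $\sigma(n)<\sigma(n-1)$. Define $\Omega_|(t,t_0)=P$ and, for a tree $T$ with $|T|=n\ge1$, $\Omega_T(t,t_0)=\sum_{\sigma\in S_T}\int_{t_0}^{t}\mathrm{d}t_1\int_{t_0}^{t_1}\mathrm{d}t_2\cdots\int_{t_0}^{t_{n-1}}\mathrm{d}t_n\, X^\sigma_1(t_{\sigma(1)})X^\sigma_2(t_{\sigma(2)})\cdots X^\sigma_n(t_{\sigma(n)})$. *)

theory Defs
  imports "HOL-Analysis.Analysis" "HOL-Combinatorics.Permutations"
begin

text \<open>A complex Hilbert space is modelled as a real Hilbert space (real_inner, complete)
  equipped with a complex structure: the operator imul (multiplication by the imaginary
  unit), which is real-linear (additive and commuting with real scaling), squares to minus the identity and is orthogonal.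
  The complex inner product is then inner x y + i * inner x (imul y) (up to convention).\<close>

class complex_hilbert = real_inner + complete_space +
  fixes imul :: "'a \<Rightarrow> 'a"
  assumes imul_add: "imul (x + y) = imul x + imul y"
    and imul_scaleR: "imul (r *\<^sub>R x) = r *\<^sub>R imul x"
    and imul_imul: "imul (imul x) = - x"
    and imul_inner: "inner (imul x) (imul y) = inner x y"

definition bounded_clinear_op :: "('a::complex_hilbert \<Rightarrow> 'a) \<Rightarrow> bool" where
  "bounded_clinear_op A \<longleftrightarrow> bounded_linear A \<and> (\<forall>x. A (imul x) = imul (A x))"

text \<open>Bounded self-adjoint operators (for complex-linear A, symmetry w.r.t. the real part
  of the complex inner product is equivalent to self-adjointness).\<close>
definition bounded_selfadjoint :: "('a::complex_hilbert \<Rightarrow> 'a) \<Rightarrow> bool" where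
  "bounded_selfadjoint A \<longleftrightarrow> bounded_clinear_op A \<and> (\<forall>x y. inner (A x) y = inner x (A y))"

definition orth_projection :: "('a::complex_hilbert \<Rightarrow> 'a) \<Rightarrow> bool" where
  "orth_projection P \<longleftrightarrow> bounded_selfadjoint P \<and> (\<forall>x. P (P x) = P x)"

datatype tree = Leaf | Graft tree tree

fun tsize :: "tree \<Rightarrow> nat" where
  "tsize Leaf = 0"
| "tsize (Graft T1 T2) = tsize T1 + tsize T2 + 1"

function phi :: "nat list \<Rightarrow> tree" where
  "phi xs = (if xs = [] then Leaf else
     (let i = (LEAST j. j < length xs \<and> xs ! j = Min (set xs)) in Graft (phi (take i xs)) (phi (drop (Suc i) xs))))"
  by pat_completeness auto
termination
proof (relation "Wellfounded.measure length")
  fix xs :: "nat list" and i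
  assume "xs \<noteq> []" "i = (LEAST j. j < length xs \<and> xs ! j = Min (set xs))"
  have "\<exists>j. j < length xs \<and> xs ! j = Min (set xs)"
    using \<open>xs \<noteq> []\<close> by (simp add: in_set_conv_nth[symmetric])
  then have "i < length xs" unfolding \<open>i = _\<close> by (rule LeastI2_ex) simp
  then show "(take i xs, xs) \<in> Wellfounded.measure length" "(drop (Suc i) xs, xs) \<in> Wellfounded.measure length"
    using \<open>xs \<noteq> []\<close> by auto
qed auto

definition S_T :: "tree \<Rightarrow> (nat \<Rightarrow> nat) set" where
  "S_T T = {\<sigma>. \<sigma> permutes {1..tsize T} \<and> phi (map \<sigma> [1..<tsize T + 1]) = T}"

definition oint :: "real \<Rightarrow> real \<Rightarrow> (real \<Rightarrow> 'a::real_normed_vector) \<Rightarrow> 'a" where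
  "oint a b f = (if a \<le> b then integral {a..b} f else - integral {b..a} f)"

text \<open>iint n t0 t F = int_{t0}^t dt_1 int_{t0}^{t_1} dt_2 ... int_{t0}^{t_{n-1}} dt_n F(t),
  where the variables are passed as a function tau with tau k = t_k (k = 1..n).\<close>
fun iint :: "nat \<Rightarrow> real \<Rightarrow> real \<Rightarrow> ((nat \<Rightarrow> real) \<Rightarrow> 'a::real_normed_vector) \<Rightarrow> 'a" where
  "iint 0 t0 t F = F (\<lambda>_. 0)"
| "iint (Suc n) t0 t F =
     oint t0 t (\<lambda>s. iint n t0 s (\<lambda>\<tau>. F (\<lambda>k. if k = 1 then s else \<tau> (k - 1))))"

definition Xfac :: "(real \<Rightarrow> 'a \<Rightarrow> 'a) \<Rightarrow> ('a \<Rightarrow> 'a) \<Rightarrow> nat \<Rightarrow> (nat \<Rightarrow> nat) \<Rightarrow> nat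
    \<Rightarrow> real \<Rightarrow> 'a \<Rightarrow> 'a::complex_hilbert" where
  "Xfac H P n \<sigma> p s v =
    (let Q = (\<lambda>x. x - P x) in
     if n = 1 then - imul (Q (H s (P v)))
     else if p = 1 then - imul (Q (H s v))
     else if p < n then
       (if \<sigma> p > \<sigma> (p - 1) then - imul (Q (H s v)) else imul (P (H s v)))
     else
       (if \<sigma> p > \<sigma> (p - 1) then - imul (Q (H s (P v))) else imul (P (H s (P v)))))"

definition Xprod :: "(real \<Rightarrow> 'a \<Rightarrow> 'a) \<Rightarrow> ('a \<Rightarrow> 'a) \<Rightarrow> nat \<Rightarrow> (nat \<Rightarrow> nat)
    \<Rightarrow> (nat \<Rightarrow> real) \<Rightarrow> 'a \<Rightarrow> 'a::complex_hilbert" where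
  "Xprod H P n \<sigma> \<tau> \<psi> = foldr (\<lambda>p acc. Xfac H P n \<sigma> p (\<tau> (\<sigma> p)) acc) [1..<n + 1] \<psi>"

definition Omega :: "(real \<Rightarrow> 'a \<Rightarrow> 'a) \<Rightarrow> ('a \<Rightarrow> 'a) \<Rightarrow> tree \<Rightarrow> real \<Rightarrow> real
    \<Rightarrow> 'a \<Rightarrow> 'a::complex_hilbert" where
  "Omega H P T t t0 = (if T = Leaf then P else
     (\<lambda>\<psi>. \<Sum>\<sigma>\<in>S_T T. iint (tsize T) t0 t (\<lambda>\<tau>. Xprod H P (tsize T) \<sigma> \<tau> \<psi>)))"

end

theory Submission
  imports Defs
begin

text \<open>Write a permutation \<open>\<sigma>\<close> with \<open>phi \<sigma> = T\<^sub>1 \<or> T\<^sub>2\<close> as the word \<open>\<alpha> 1 \<beta>\<close>. The factor at the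
  position of the minimum \<open>1\<close> carries the outermost integration variable \<open>s\<close>; the factors to its
  left are, up to an order-preserving relabelling that does not change ascents, those of a word for
  \<open>T\<^sub>1\<close>, and the factors to its right those of a word for \<open>T\<^sub>2\<close>. The remaining integration variables
  are dealt out to the two blocks according to a shuffle, and summing over all shuffles turns the
  integral over the simplex of dimension \<open>|T\<^sub>1| + |T\<^sub>2|\<close> below \<open>s\<close> into the product of the simplex
  integrals of the two blocks. What remains under the outermost integral is \<open>\<Omega>\<^bsub>T\<^sub>1\<^esub>(s)\<close>, the
  factor at the minimum, and \<open>\<Omega>\<^bsub>T\<^sub>2\<^esub>(s)\<close>.\<close>

lemma continuous_on_compose_UNIV:
  assumes "continuous_on UNIV F" and "continuous_on S a"
  shows "continuous_on S (\<lambda>x. F (a x))"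
  by (rule continuous_on_compose2[OF assms]) simp

lemma continuous_on_compose_curried:
  assumes "continuous_on UNIV (\<lambda>(q, t). F q t)"
    and "continuous_on S a" and "continuous_on S b"
  shows "continuous_on S (\<lambda>x. F (a x) (b x))"
  using continuous_on_compose_UNIV[OF assms(1) continuous_on_Pair[OF assms(2,3)]] by simp

lemma continuous_on_fst_id: "continuous_on S fst"
  by (rule continuous_on_fst[OF continuous_on_id, unfolded id_def])

lemma continuous_on_snd_id: "continuous_on S snd"
  by (rule continuous_on_snd[OF continuous_on_id, unfolded id_def])

section \<open>Oriented integrals\<close>

lemma continuous_on_integrable_interval:
  fixes f :: "real \<Rightarrow> 'b::banach"
  shows "continuous_on UNIV f \<Longrightarrow> f integrable_on {a..b}"
  by (rule integrable_continuous_real) (rule continuous_on_subset, auto)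

lemma oint_self [simp]: "oint a a f = 0"
  by (simp add: oint_def)

lemma integral_rescale_unit_interval:
  fixes f :: "real \<Rightarrow> 'b::banach"
  assumes "a < b" "continuous_on UNIV f"
  shows "integral {a..b} f = (b - a) *\<^sub>R integral {0..1} (\<lambda>r. f (a + r * (b - a)))"
proof -
  have "(f has_integral integral {a..b} f) (cbox a b)"
    using continuous_on_integrable_interval[OF assms(2)] by (metis box_real(2) integrable_integral)
  from has_integral_affinity'[OF this, of "b - a" a] assms(1)
  have "((\<lambda>x. f ((b - a) *\<^sub>R x + a)) has_integral integral {a..b} f /\<^sub>R (b - a)) (cbox 0 1)"
    by simp
  then have "integral {0..1} (\<lambda>r. f (a + r * (b - a))) = integral {a..b} f /\<^sub>R (b - a)"
    by (simp add: integral_unique algebra_simps)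
  then show ?thesis using assms(1) by simp
qed

lemma oint_rescale_unit_interval:
  fixes f :: "real \<Rightarrow> 'b::banach"
  assumes "continuous_on UNIV f"
  shows "oint a b f = (b - a) *\<^sub>R integral {0..1} (\<lambda>r. f (a + r * (b - a)))"
proof (cases a b rule: linorder_cases)
  case less
  then show ?thesis using integral_rescale_unit_interval[OF less assms] by (simp add: oint_def)
next
  case equal
  then show ?thesis by simp
next
  case greater
  let ?g = "\<lambda>x. f (- x)"
  have cg: "continuous_on UNIV ?g"
    by (intro continuous_on_compose_UNIV[OF assms] continuous_intros)
  have "integral {b..a} f = integral {-a..-b} ?g"
    by (rule Henstock_Kurzweil_Integration.integral_reflect_real[symmetric])
  also have "\<dots> = (a - b) *\<^sub>R integral {0..1} (\<lambda>r. ?g (- a + r * (- b - - a)))"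
    using integral_rescale_unit_interval[OF _ cg, of "-a" "-b"] greater by simp
  also have "(\<lambda>r. ?g (- a + r * (- b - - a))) = (\<lambda>r. f (a + r * (b - a)))"
    by (rule ext) (simp add: algebra_simps)
  finally show ?thesis using greater by (simp add: oint_def scaleR_left_diff_distrib)
qed

text \<open>Rescaling to the fixed interval \<open>[0,1]\<close> moves the dependence on the endpoints into the
  integrand, where continuity of parameter integrals applies.\<close>

lemma continuous_on_oint_param:
  fixes g :: "'p::topological_space \<Rightarrow> real \<Rightarrow> 'b::banach"
  assumes g: "continuous_on UNIV (\<lambda>(p, s). g p s)"
    and a: "continuous_on UNIV a" and b: "continuous_on UNIV b"
  shows "continuous_on UNIV (\<lambda>p. oint (a p) (b p) (g p))"
proof -
  have eq: "oint (a p) (b p) (g p) =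
      (b p - a p) *\<^sub>R integral (cbox 0 1) (\<lambda>r. g p (a p + r * (b p - a p)))" for p
    using oint_rescale_unit_interval[OF continuous_on_compose_curried[OF g continuous_on_const
          continuous_on_id]] by simp
  have "continuous_on (UNIV \<times> cbox 0 1) (\<lambda>(p, r). g p (a p + r * (b p - a p)))"
    unfolding split_beta
    by (intro continuous_on_compose_curried[OF g] continuous_intros
        continuous_on_compose_UNIV[OF a] continuous_on_compose_UNIV[OF b])
  then have "continuous_on UNIV (\<lambda>p. integral (cbox 0 1) (\<lambda>r. g p (a p + r * (b p - a p))))"
    by (rule integral_continuous_on_param)
  then show ?thesis unfolding eq
    by (intro continuous_intros a b)
qed

lemma oint_eq_integral_diff:
  fixes f :: "real \<Rightarrow> 'b::banach"
  assumes "c \<le> a" "c \<le> b" "continuous_on UNIV f"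
  shows "oint a b f = integral {c..b} f - integral {c..a} f"
proof (cases "a \<le> b")
  case True
  have "integral {c..a} f + integral {a..b} f = integral {c..b} f"
    using assms True by (intro Henstock_Kurzweil_Integration.integral_combine continuous_on_integrable_interval) auto
  then show ?thesis using True by (simp add: oint_def algebra_simps)
next
  case False
  have "integral {c..b} f + integral {b..a} f = integral {c..a} f"
    using assms False by (intro Henstock_Kurzweil_Integration.integral_combine continuous_on_integrable_interval) auto
  then show ?thesis using False by (simp add: oint_def algebra_simps)
qed

lemma has_vector_derivative_oint:
  fixes f :: "real \<Rightarrow> 'b::banach"
  assumes f: "continuous_on UNIV f"
  shows "((\<lambda>s. oint a s f) has_vector_derivative f x) (at x)"
proof -
  define c where "c = min a x - 1"
  have cx: "c < x" "c \<le> a" unfolding c_def by linarith+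
  have "((\<lambda>u. integral {c..u} f) has_vector_derivative f x) (at x within {c..x+1})"
    using cx by (intro integral_has_vector_derivative continuous_on_subset[OF f]) auto
  moreover have "x \<in> interior {c..x+1}" using cx by simp
  ultimately have "((\<lambda>u. integral {c..u} f) has_vector_derivative f x) (at x)"
    using at_within_interior[of x "{c..x+1}"] by metis
  then have "((\<lambda>u. integral {c..u} f - integral {c..a} f) has_vector_derivative f x) (at x)"
    using has_vector_derivative_diff[OF _ has_vector_derivative_const] by fastforce
  then show ?thesis
  proof (rule has_vector_derivative_transform_within_open[of _ _ _ "{c<..}"])
    fix y :: real assume "y \<in> {c<..}"
    then show "integral {c..y} f - integral {c..a} f = oint a y f"
      using oint_eq_integral_diff[OF cx(2) _ f] by simp
  qed (use cx in auto)
qed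

lemma oint_fundamental_theorem:
  fixes F f :: "real \<Rightarrow> 'b::banach"
  assumes "\<And>x. (F has_vector_derivative f x) (at x)"
  shows "oint a b f = F b - F a"
proof (cases "a \<le> b")
  case True
  have "(f has_integral (F b - F a)) {a..b}"
    using True assms by (intro fundamental_theorem_of_calculus) (auto intro: has_vector_derivative_at_within)
  then show ?thesis using True by (simp add: oint_def integral_unique)
next
  case False
  have "(f has_integral (F a - F b)) {b..a}"
    using False assms by (intro fundamental_theorem_of_calculus) (auto intro: has_vector_derivative_at_within)
  then show ?thesis using False by (simp add: oint_def integral_unique)
qed

lemma oint_linear:
  fixes f :: "real \<Rightarrow> 'b::banach"
  assumes L: "bounded_linear L" and f: "continuous_on UNIV f"
  shows "L (oint a b f) = oint a b (\<lambda>s. L (f s))"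
proof -
  have "integral S (\<lambda>s. L (f s)) = L (integral S f)" if "S = {a..b} \<or> S = {b..a}" for S
    using integral_linear[OF _ L, of f S] that continuous_on_integrable_interval[OF f]
    by (auto simp: o_def)
  then show ?thesis
    by (simp add: oint_def linear_neg[OF bounded_linear.linear[OF L]])
qed

lemma oint_sum:
  fixes f :: "'i \<Rightarrow> real \<Rightarrow> 'b::banach"
  assumes "finite I" and "\<And>i. i \<in> I \<Longrightarrow> continuous_on UNIV (f i)"
  shows "oint a b (\<lambda>s. \<Sum>i\<in>I. f i s) = (\<Sum>i\<in>I. oint a b (f i))"
proof -
  have "integral S (\<lambda>s. \<Sum>i\<in>I. f i s) = (\<Sum>i\<in>I. integral S (f i))" if "S = {a..b} \<or> S = {b..a}" for S
    using that assms continuous_on_integrable_interval integral_sum by blast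
  then show ?thesis by (simp add: oint_def sum_negf)
qed

lemma oint_swap:
  fixes f :: "real \<Rightarrow> real \<Rightarrow> 'b::banach"
  assumes "continuous_on UNIV (\<lambda>(x, y). f x y)"
  shows "oint a b (\<lambda>x. oint c d (f x)) = oint c d (\<lambda>y. oint a b (\<lambda>x. f x y))"
proof -
  have "integral {A..B} (\<lambda>x. integral {C..D} (f x)) = integral {C..D} (\<lambda>y. integral {A..B} (\<lambda>x. f x y))"
    for A B C D
    using integral_swap_continuous[OF continuous_on_subset[OF assms, of "cbox (A, C) (B, D)"]] by simp
  then show ?thesis by (simp add: oint_def)
qed

section \<open>Iterated integrals\<close>

definition shift :: "real \<Rightarrow> (nat \<Rightarrow> real) \<Rightarrow> nat \<Rightarrow> real" where
  "shift s \<tau> = (\<lambda>k. if k = 1 then s else \<tau> (k - 1))"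

lemma iint_Suc_shift: "iint (Suc n) t0 t F = oint t0 t (\<lambda>s. iint n t0 s (\<lambda>\<tau>. F (shift s \<tau>)))"
  by (simp add: shift_def)

lemma continuous_on_shift [continuous_intros]:
  assumes "continuous_on S a" "continuous_on S b"
  shows "continuous_on S (\<lambda>x. shift (a x) (b x))"
proof (rule continuous_on_coordinatewise_then_product)
  fix k :: nat
  show "continuous_on S (\<lambda>x. shift (a x) (b x) k)"
    using assms continuous_on_product_then_coordinatewise[OF assms(2), of "k - 1"]
    by (cases "k = 1") (simp_all add: shift_def)
qed

lemma continuous_on_seq_tail [continuous_intros]:
  assumes "continuous_on S b"
  shows "continuous_on S (\<lambda>x k. b x (Suc k))"
  by (rule continuous_on_coordinatewise_then_product)
    (rule continuous_on_product_then_coordinatewise[OF assms])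

text \<open>The type of the parameter cannot change inside an induction, so the integration variables
  that are already bound are carried along in a sequence-valued component of the parameter.\<close>

lemma continuous_on_iint_aux:
  fixes F :: "'p::topological_space \<times> (nat \<Rightarrow> real) \<Rightarrow> (nat \<Rightarrow> real) \<Rightarrow> 'b::banach"
  assumes "continuous_on UNIV (\<lambda>(q, \<tau>). F q \<tau>)" "continuous_on UNIV b"
  shows "continuous_on UNIV (\<lambda>q. iint n t0 (b q) (F q))"
  using assms
proof (induction n arbitrary: F b)
  case 0
  show ?case
    by (simp add: continuous_on_compose_curried[OF 0(1) continuous_on_id continuous_on_const])
next
  case (Suc n)
  define cons where "cons s \<rho> = (\<lambda>k. if k = 0 then s else \<rho> (k - 1 :: nat))" for s :: real and \<rho>
  have cont_cons: "continuous_on S (\<lambda>x. cons (a x) (\<rho> x))"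
    if "continuous_on S a" "continuous_on S \<rho>" for S a \<rho>
  proof (rule continuous_on_coordinatewise_then_product)
    fix k :: nat
    show "continuous_on S (\<lambda>x. cons (a x) (\<rho> x) k)"
      using that continuous_on_product_then_coordinatewise[OF that(2), of "k - 1"]
      by (cases "k = 0") (simp_all add: cons_def)
  qed
  define F' where "F' q \<tau> = F (fst q, \<lambda>k. snd q (Suc k)) (shift (snd q 0) \<tau>)" for q \<tau>
  have c0: "continuous_on UNIV (\<lambda>x::('p \<times> (nat \<Rightarrow> real)) \<times> (nat \<Rightarrow> real). snd (fst x) 0)"
    by (rule continuous_on_product_then_coordinatewise) (intro continuous_intros)
  have "continuous_on UNIV (\<lambda>x. F (fst (fst x), \<lambda>k. snd (fst x) (Suc k)) (shift (snd (fst x) 0) (snd x)))"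
    by (intro continuous_on_compose_curried[OF Suc.prems(1)] continuous_intros c0)
  then have "continuous_on UNIV (\<lambda>(q, \<tau>). F' q \<tau>)"
    by (simp add: F'_def split_beta)
  from Suc.IH[OF this continuous_on_product_then_coordinatewise[OF continuous_on_snd_id]]
  have IH: "continuous_on UNIV (\<lambda>q. iint n t0 (snd q 0) (F' q))" .
  have "continuous_on UNIV (\<lambda>x::('p \<times> (nat \<Rightarrow> real)) \<times> real. (fst (fst x), cons (snd x) (snd (fst x))))"
    by (intro continuous_intros cont_cons)
  from continuous_on_compose_UNIV[OF IH this]
  have "continuous_on UNIV (\<lambda>(q, s). iint n t0 s (\<lambda>\<tau>. F q (shift s \<tau>)))"
    by (simp add: F'_def[abs_def] cons_def split_beta)
  then show ?case unfolding iint_Suc_shift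
    by (rule continuous_on_oint_param[OF _ continuous_on_const Suc.prems(2)])
qed

lemma continuous_on_iint:
  fixes F :: "'p::topological_space \<Rightarrow> (nat \<Rightarrow> real) \<Rightarrow> 'b::banach"
  assumes F: "continuous_on UNIV (\<lambda>(p, \<tau>). F p \<tau>)" and b: "continuous_on UNIV b"
  shows "continuous_on UNIV (\<lambda>p. iint n t0 (b p) (F p))"
proof -
  have "continuous_on UNIV (\<lambda>(q, \<tau>). F (fst q) \<tau>)"
    using continuous_on_compose_curried[OF F, of UNIV "\<lambda>x. fst (fst x)" snd]
    by (simp add: split_beta continuous_on_snd_id continuous_on_fst continuous_on_fst_id)
  from continuous_on_iint_aux[OF this continuous_on_compose_UNIV[OF b continuous_on_fst_id], of n t0]
  have "continuous_on UNIV (\<lambda>q::'p \<times> (nat \<Rightarrow> real). iint n t0 (b (fst q)) (F (fst q)))" .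
  from continuous_on_compose_UNIV[OF this, of _ "\<lambda>p. (p, \<lambda>_. 0)"]
  show ?thesis by (simp add: continuous_on_Pair continuous_on_id continuous_on_const)
qed

lemma continuous_on_iint_shift:
  fixes F :: "(nat \<Rightarrow> real) \<Rightarrow> 'b::banach"
  assumes "continuous_on UNIV F"
  shows "continuous_on UNIV (\<lambda>s. iint n t0 s (\<lambda>\<tau>. F (shift s \<tau>)))"
proof (rule continuous_on_iint[OF _ continuous_on_id])
  show "continuous_on UNIV (\<lambda>(s, \<tau>). F (shift s \<tau>))"
    unfolding split_beta
    by (intro continuous_on_compose_UNIV[OF assms] continuous_intros continuous_on_fst_id
        continuous_on_snd_id)
qed

lemma continuous_on_shift_const:
  "continuous_on UNIV F \<Longrightarrow> continuous_on UNIV (\<lambda>\<tau>. F (shift s \<tau>))"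
  by (erule continuous_on_compose_UNIV) (intro continuous_intros)

lemma iint_linear:
  fixes F :: "(nat \<Rightarrow> real) \<Rightarrow> 'b::banach"
  assumes L: "bounded_linear L" and F: "continuous_on UNIV F"
  shows "L (iint n t0 t F) = iint n t0 t (\<lambda>\<tau>. L (F \<tau>))"
  using F
proof (induction n arbitrary: t F)
  case (Suc n)
  have "L (iint (Suc n) t0 t F) = oint t0 t (\<lambda>s. L (iint n t0 s (\<lambda>\<tau>. F (shift s \<tau>))))"
    unfolding iint_Suc_shift by (rule oint_linear[OF L continuous_on_iint_shift[OF Suc.prems]])
  then show ?case
    unfolding iint_Suc_shift using Suc.IH[OF continuous_on_shift_const[OF Suc.prems]] by simp
qed simp

lemma iint_sum:
  fixes F :: "'i \<Rightarrow> (nat \<Rightarrow> real) \<Rightarrow> 'b::banach"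
  assumes I: "finite I" and F: "\<And>i. i \<in> I \<Longrightarrow> continuous_on UNIV (F i)"
  shows "iint n t0 t (\<lambda>\<tau>. \<Sum>i\<in>I. F i \<tau>) = (\<Sum>i\<in>I. iint n t0 t (F i))"
  using F
proof (induction n arbitrary: t F)
  case (Suc n)
  have "iint (Suc n) t0 t (\<lambda>\<tau>. \<Sum>i\<in>I. F i \<tau>) =
      oint t0 t (\<lambda>s. \<Sum>i\<in>I. iint n t0 s (\<lambda>\<tau>. F i (shift s \<tau>)))"
    unfolding iint_Suc_shift using Suc.IH[OF continuous_on_shift_const[OF Suc.prems]] by simp
  also have "\<dots> = (\<Sum>i\<in>I. oint t0 t (\<lambda>s. iint n t0 s (\<lambda>\<tau>. F i (shift s \<tau>))))"
    by (rule oint_sum[OF I continuous_on_iint_shift[OF Suc.prems]])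
  finally show ?case unfolding iint_Suc_shift .
qed simp

lemma iint_oint_swap:
  fixes h :: "(nat \<Rightarrow> real) \<Rightarrow> real \<Rightarrow> 'b::banach"
  assumes "continuous_on UNIV (\<lambda>(u, y). h u y)"
  shows "iint m t0 x (\<lambda>u. oint c d (h u)) = oint c d (\<lambda>y. iint m t0 x (\<lambda>u. h u y))"
  using assms
proof (induction m arbitrary: x h)
  case (Suc m)
  have "continuous_on UNIV (\<lambda>(u, y). h (shift x1 u) y)" for x1
    unfolding split_beta
    by (intro continuous_on_compose_curried[OF Suc.prems] continuous_intros continuous_on_fst_id
        continuous_on_snd_id)
  note IH = Suc.IH[OF this]
  have "continuous_on UNIV (\<lambda>(p, u). h (shift (fst p) u) (snd p))"
    unfolding split_beta
    by (intro continuous_on_compose_curried[OF Suc.prems] continuous_intros continuous_on_fst_id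
        continuous_on_snd_id)
  from continuous_on_iint[OF this continuous_on_fst_id, of m t0]
  have "continuous_on UNIV (\<lambda>(x1, y). iint m t0 x1 (\<lambda>u. h (shift x1 u) y))"
    by (simp add: split_beta)
  from oint_swap[OF this]
  show ?case unfolding iint_Suc_shift by (simp add: IH)
qed simp

section \<open>Shuffle product of iterated integrals\<close>

text \<open>Differentiation along the diagonal; continuity of the partial derivative in \<open>y\<close> makes
  \<open>M\<close> totally differentiable.\<close>

lemma oint_diagonal:
  fixes f g :: "real \<Rightarrow> real \<Rightarrow> 'b::banach" and M :: "real \<Rightarrow> real \<Rightarrow> 'b"
  assumes cf: "continuous_on UNIV (\<lambda>(x, y). f x y)" and cg: "continuous_on UNIV (\<lambda>(x, y). g x y)"
    and Mf: "\<And>x y. M x y = oint t0 x (\<lambda>x1. f x1 y)"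
    and Mg: "\<And>x y. M x y = oint t0 y (\<lambda>y1. g x y1)"
  shows "M s s = oint t0 s (\<lambda>r. f r r + g r r)"
proof -
  have fx: "((\<lambda>x. M x y) has_derivative (\<lambda>h. h *\<^sub>R f x y)) (at x within UNIV)" for x y
    using has_vector_derivative_oint[OF continuous_on_compose_curried[OF cf continuous_on_id
          continuous_on_const]]
    by (simp add: Mf has_vector_derivative_def)
  have fy: "((\<lambda>y. M x y) has_derivative blinfun_scaleR_left (g x y)) (at y within UNIV)" for x y
    using has_vector_derivative_oint[OF continuous_on_compose_curried[OF cg continuous_on_const
          continuous_on_id]]
    by (simp add: Mg has_vector_derivative_def)
  have "continuous_on UNIV (\<lambda>z. blinfun_scaleR_left ((\<lambda>(x, y). g x y) z))"
    by (rule continuous_on_compose_UNIV[OF linear_continuous_on[OF bounded_linear_blinfun_scaleR_left] cg])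
  then have cbl: "continuous_on UNIV (\<lambda>(x, y). blinfun_scaleR_left (g x y))"
    by (simp add: split_beta)
  have deriv: "((\<lambda>s. M s s) has_vector_derivative (f x x + g x x)) (at x)" for x
  proof -
    have "((\<lambda>(x, y). M x y) has_derivative (\<lambda>(tx, ty). tx *\<^sub>R f x x + blinfun_scaleR_left (g x x) ty))
        (at (x, x) within UNIV \<times> UNIV)"
      by (rule has_derivative_partialsI[OF fx fy])
        (use cbl in \<open>auto simp: continuous_on_eq_continuous_within\<close>)
    then have "((\<lambda>(x, y). M x y) has_derivative (\<lambda>(tx, ty). tx *\<^sub>R f x x + ty *\<^sub>R g x x)) (at (x, x))"
      by simp
    moreover have "((\<lambda>s. (s, s)) has_derivative (\<lambda>h. (h, h))) (at x)"
      by (intro derivative_eq_intros) auto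
    ultimately have "((\<lambda>s. M s s) has_derivative (\<lambda>h. h *\<^sub>R (f x x + g x x))) (at x)"
      using has_derivative_compose by (fastforce simp: scaleR_right_distrib)
    then show ?thesis by (simp add: has_vector_derivative_def)
  qed
  show ?thesis
    using oint_fundamental_theorem[OF deriv, of t0 s] by (simp add: Mf)
qed

text \<open>Read along a word, the integration variables \<open>\<tau> 1, \<tau> 2, \<dots>\<close> of an iterated integral are dealt out
  to the two factors of a product: \<open>true_vars w \<tau>\<close> is the sequence (indexed from 1, like \<open>\<tau>\<close>) of the
  variables at the positions where \<open>w\<close> is \<open>True\<close>.\<close>

fun shuffle_words :: "nat \<Rightarrow> nat \<Rightarrow> bool list set" where
  "shuffle_words 0 0 = {[]}"
| "shuffle_words (Suc a) 0 = Cons True ` shuffle_words a 0"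
| "shuffle_words 0 (Suc b) = Cons False ` shuffle_words 0 b"
| "shuffle_words (Suc a) (Suc b) = Cons True ` shuffle_words a (Suc b) \<union> Cons False ` shuffle_words (Suc a) b"

lemma finite_shuffle_words: "finite (shuffle_words a b)"
  by (induction a b rule: shuffle_words.induct) auto

lemma sum_shuffle_words:
  assumes "a + b > 0"
  shows "(\<Sum>w\<in>shuffle_words a b. f w) =
    (if a > 0 then (\<Sum>w\<in>shuffle_words (a - 1) b. f (True # w)) else 0) +
    (if b > 0 then (\<Sum>w\<in>shuffle_words a (b - 1). f (False # w)) else 0)"
proof (cases a)
  case 0
  then obtain b' where "b = Suc b'" using assms by (cases b) auto
  then show ?thesis using 0 by (simp add: sum.reindex)
next
  case (Suc a')
  have "sum f (Cons True ` X \<union> Cons False ` Y) = sum f (Cons True ` X) + sum f (Cons False ` Y)"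
    if "finite X" "finite Y" for X Y
    using that by (intro sum.union_disjoint) auto
  then show ?thesis
    using Suc by (cases b) (simp_all add: sum.reindex finite_shuffle_words)
qed

fun true_vars :: "bool list \<Rightarrow> (nat \<Rightarrow> real) \<Rightarrow> nat \<Rightarrow> real" where
  "true_vars [] \<tau> = (\<lambda>_. 0)"
| "true_vars (True # w) \<tau> = shift (\<tau> 1) (true_vars w (\<lambda>k. \<tau> (Suc k)))"
| "true_vars (False # w) \<tau> = true_vars w (\<lambda>k. \<tau> (Suc k))"

definition false_vars :: "bool list \<Rightarrow> (nat \<Rightarrow> real) \<Rightarrow> nat \<Rightarrow> real" where
  "false_vars w = true_vars (map Not w)"

lemma true_vars_cong: "(\<And>k. k \<ge> 1 \<Longrightarrow> \<tau> k = \<tau>' k) \<Longrightarrow> true_vars w \<tau> = true_vars w \<tau>'"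
proof (induction w arbitrary: \<tau> \<tau>')
  case (Cons x w)
  have "true_vars w (\<lambda>k. \<tau> (Suc k)) = true_vars w (\<lambda>k. \<tau>' (Suc k))"
    by (rule Cons.IH) (simp add: Cons.prems)
  then show ?case using Cons.prems by (cases x) auto
qed simp

lemma true_vars_Cons_shift:
  "true_vars (True # w) (shift r \<tau>) = shift r (true_vars w \<tau>)"
  "true_vars (False # w) (shift r \<tau>) = true_vars w \<tau>"
proof -
  have "true_vars w (\<lambda>k. shift r \<tau> (Suc k)) = true_vars w \<tau>"
    by (rule true_vars_cong) (simp add: shift_def)
  then show "true_vars (True # w) (shift r \<tau>) = shift r (true_vars w \<tau>)"
    "true_vars (False # w) (shift r \<tau>) = true_vars w \<tau>"
    by (simp_all add: shift_def[of r \<tau>])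
qed

lemma false_vars_Cons_shift:
  "false_vars (True # w) (shift r \<tau>) = false_vars w \<tau>"
  "false_vars (False # w) (shift r \<tau>) = shift r (false_vars w \<tau>)"
  by (simp_all add: false_vars_def true_vars_Cons_shift del: true_vars.simps)

lemma continuous_on_true_vars [continuous_intros]:
  "continuous_on S h \<Longrightarrow> continuous_on S (\<lambda>x. true_vars w (h x))"
proof (induction w arbitrary: h)
  case (Cons x w)
  have "continuous_on S (\<lambda>z. true_vars w (\<lambda>k. h z (Suc k)))"
    by (intro Cons.IH continuous_on_seq_tail Cons.prems)
  then show ?case
    using continuous_on_product_then_coordinatewise[OF Cons.prems, of 1]
    by (cases x) (simp_all add: continuous_on_shift)
qed (simp add: continuous_on_const)

lemma continuous_on_false_vars [continuous_intros]:
  "continuous_on S h \<Longrightarrow> continuous_on S (\<lambda>x. false_vars w (h x))"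
  unfolding false_vars_def by (rule continuous_on_true_vars)

lemma iint_product_diagonal:
  fixes G :: "(nat \<Rightarrow> real) \<Rightarrow> (nat \<Rightarrow> real) \<Rightarrow> 'b::banach"
  assumes G: "continuous_on UNIV (\<lambda>(u, v). G u v)"
  shows "iint (Suc a) t0 s (\<lambda>u. iint (Suc b) t0 s (G u)) =
    oint t0 s (\<lambda>r. iint a t0 r (\<lambda>u. iint (Suc b) t0 r (G (shift r u)))
                 + iint (Suc a) t0 r (\<lambda>u. iint b t0 r (\<lambda>v. G u (shift r v))))"
proof -
  define M where "M x y = iint (Suc a) t0 x (\<lambda>u. iint (Suc b) t0 y (G u))" for x y
  have h: "continuous_on UNIV (\<lambda>(u, y). iint b t0 y (\<lambda>v. G u (shift y v)))"
  proof -
    have "continuous_on UNIV (\<lambda>(q, v). G (fst q) (shift (snd q) v))"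
      unfolding split_beta by (intro continuous_on_compose_curried[OF G] continuous_intros)
    from continuous_on_iint[OF this continuous_on_snd_id, of b t0]
    show ?thesis by (simp add: split_beta)
  qed
  have "continuous_on UNIV (\<lambda>(q, v). G (shift (fst (fst q)) (snd q)) v)"
    unfolding split_beta by (intro continuous_on_compose_curried[OF G] continuous_intros)
  from continuous_on_iint[OF this continuous_on_snd[OF continuous_on_fst_id], of "Suc b" t0]
  have "continuous_on UNIV (\<lambda>(p, u). iint (Suc b) t0 (snd p) (G (shift (fst p) u)))"
    by (simp add: split_beta)
  from continuous_on_iint[OF this continuous_on_fst_id, of a t0]
  have cf: "continuous_on UNIV (\<lambda>(x, y). iint a t0 x (\<lambda>u. iint (Suc b) t0 y (G (shift x u))))"
    by (simp add: split_beta)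
  have "continuous_on UNIV (\<lambda>z::(real \<times> real) \<times> (nat \<Rightarrow> real).
      (\<lambda>(u, y). iint b t0 y (\<lambda>v. G u (shift y v))) (snd z, snd (fst z)))"
    by (intro continuous_on_compose_UNIV[OF h] continuous_intros)
  then have "continuous_on UNIV (\<lambda>(p :: real \<times> real, u). iint b t0 (snd p) (\<lambda>v. G u (shift (snd p) v)))"
    by (simp add: split_beta)
  from continuous_on_iint[OF this continuous_on_fst_id, of "Suc a" t0]
  have cg: "continuous_on UNIV (\<lambda>(x, y). iint (Suc a) t0 x (\<lambda>u. iint b t0 y (\<lambda>v. G u (shift y v))))"
    by (simp add: split_beta)
  have "M x y = oint t0 x (\<lambda>x1. iint a t0 x1 (\<lambda>u. iint (Suc b) t0 y (G (shift x1 u))))" for x y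
    unfolding M_def iint_Suc_shift ..
  moreover have "M x y = oint t0 y (\<lambda>y1. iint (Suc a) t0 x (\<lambda>u. iint b t0 y1 (\<lambda>v. G u (shift y1 v))))" for x y
    unfolding M_def iint_Suc_shift[of b] by (rule iint_oint_swap[OF h])
  ultimately have "M s s = oint t0 s (\<lambda>r. iint a t0 r (\<lambda>u. iint (Suc b) t0 r (G (shift r u)))
                 + iint (Suc a) t0 r (\<lambda>u. iint b t0 r (\<lambda>v. G u (shift r v))))"
    by (rule oint_diagonal[OF cf cg])
  then show ?thesis by (simp only: M_def)
qed

lemma iint_product_eq_oint:
  fixes G :: "(nat \<Rightarrow> real) \<Rightarrow> (nat \<Rightarrow> real) \<Rightarrow> 'b::banach"
  assumes G: "continuous_on UNIV (\<lambda>(u, v). G u v)" and "a + b > 0"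
  shows "iint a t0 s (\<lambda>u. iint b t0 s (G u)) =
    oint t0 s (\<lambda>r. (if a > 0 then iint (a - 1) t0 r (\<lambda>u. iint b t0 r (G (shift r u))) else 0)
                 + (if b > 0 then iint a t0 r (\<lambda>u. iint (b - 1) t0 r (\<lambda>v. G u (shift r v))) else 0))"
proof -
  consider (left_empty) b' where "a = 0" "b = Suc b'" | (right_empty) a' where "a = Suc a'" "b = 0"
    | (both) a' b' where "a = Suc a'" "b = Suc b'"
    using \<open>a + b > 0\<close> by (cases a; cases b) auto
  then show ?thesis
  proof cases
    case left_empty
    then show ?thesis by (simp add: iint_Suc_shift del: iint.simps(2))
  next
    case right_empty
    then show ?thesis by (simp add: iint_Suc_shift del: iint.simps(2))
  next
    case both
    then show ?thesis using iint_product_diagonal[OF G] by simp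
  qed
qed

text \<open>The simplex of dimension \<open>a + b\<close> is cut into the pieces on which the variables of the two
  factors are interleaved according to a fixed shuffle word; differentiating in the common upper
  limit reduces the claim to the words starting with \<open>True\<close> and with \<open>False\<close>.\<close>

theorem iint_shuffle_product:
  fixes G :: "(nat \<Rightarrow> real) \<Rightarrow> (nat \<Rightarrow> real) \<Rightarrow> 'b::banach"
  assumes G: "continuous_on UNIV (\<lambda>(u, v). G u v)"
  shows "(\<Sum>w\<in>shuffle_words a b. iint (a + b) t0 s (\<lambda>\<tau>. G (true_vars w \<tau>) (false_vars w \<tau>)))
       = iint a t0 s (\<lambda>u. iint b t0 s (G u))"
  using G
proof (induction "a + b" arbitrary: a b G s)
  case 0
  then show ?case by (simp add: false_vars_def)
next
  case (Suc m)
  note cont_G = Suc.prems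
  define A where "A r = iint (a - 1) t0 r (\<lambda>u. iint b t0 r (G (shift r u)))" for r
  define B where "B r = iint a t0 r (\<lambda>u. iint (b - 1) t0 r (\<lambda>v. G u (shift r v)))" for r
  have cont_left: "continuous_on UNIV (\<lambda>(u, v). G (shift r u) v)" for r
    unfolding split_beta by (intro continuous_on_compose_curried[OF cont_G] continuous_intros)
  have cont_right: "continuous_on UNIV (\<lambda>(u, v). G u (shift r v))" for r
    unfolding split_beta by (intro continuous_on_compose_curried[OF cont_G] continuous_intros)
  have step: "(\<Sum>w\<in>shuffle_words a b. iint m t0 r (\<lambda>\<tau>. G (true_vars w (shift r \<tau>)) (false_vars w (shift r \<tau>))))
     = (if a > 0 then A r else 0) + (if b > 0 then B r else 0)" for r
  proof -
    have "(\<Sum>w\<in>shuffle_words (a - 1) b.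
        iint m t0 r (\<lambda>\<tau>. G (shift r (true_vars w \<tau>)) (false_vars w \<tau>))) = A r" if "a > 0"
    proof -
      have m: "m = (a - 1) + b" using that Suc.hyps(2) by simp
      show ?thesis using Suc.hyps(1)[OF m cont_left[of r], of r] by (simp add: A_def m)
    qed
    moreover have "(\<Sum>w\<in>shuffle_words a (b - 1).
        iint m t0 r (\<lambda>\<tau>. G (true_vars w \<tau>) (shift r (false_vars w \<tau>)))) = B r" if "b > 0"
    proof -
      have m: "m = a + (b - 1)" using that Suc.hyps(2) by simp
      show ?thesis using Suc.hyps(1)[OF m cont_right[of r], of r] by (simp add: B_def m)
    qed
    ultimately show ?thesis
      using Suc.hyps(2) by (subst sum_shuffle_words)
        (auto simp: true_vars_Cons_shift false_vars_Cons_shift simp del: true_vars.simps)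
  qed
  have "continuous_on UNIV (\<lambda>\<tau>. G (true_vars w \<tau>) (false_vars w \<tau>))" for w
    by (intro continuous_on_compose_curried[OF cont_G] continuous_intros)
  then have "(\<Sum>w\<in>shuffle_words a b. iint (a + b) t0 s (\<lambda>\<tau>. G (true_vars w \<tau>) (false_vars w \<tau>)))
      = oint t0 s (\<lambda>r. \<Sum>w\<in>shuffle_words a b.
          iint m t0 r (\<lambda>\<tau>. G (true_vars w (shift r \<tau>)) (false_vars w (shift r \<tau>))))"
    unfolding Suc.hyps(2)[symmetric] iint_Suc_shift
    by (intro oint_sum[symmetric] finite_shuffle_words continuous_on_iint_shift)
  also have "\<dots> = oint t0 s (\<lambda>r. (if a > 0 then A r else 0) + (if b > 0 then B r else 0))"
    by (simp only: step)
  also have "\<dots> = iint a t0 s (\<lambda>u. iint b t0 s (G u))"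
    unfolding A_def B_def by (rule iint_product_eq_oint[OF cont_G, symmetric]) (use Suc.hyps(2) in arith)
  finally show ?case .
qed

fun true_pos :: "bool list \<Rightarrow> nat \<Rightarrow> nat" where
  "true_pos [] k = 0"
| "true_pos (True # w) k = (if k = 1 then 1 else Suc (true_pos w (k - 1)))"
| "true_pos (False # w) k = Suc (true_pos w k)"

definition true_positions :: "bool list \<Rightarrow> nat set" where
  "true_positions w = {j \<in> {1..length w}. w ! (j - 1)}"

lemma length_eq_count_True_False: "length w = count_list w True + count_list w False"
  by (induction w) auto

lemma count_list_map_Not: "count_list (map Not w) b = count_list w (\<not> b)"
  by (induction w) auto

lemma shuffle_words_iff: "w \<in> shuffle_words a b \<longleftrightarrow> count_list w True = a \<and> count_list w False = b"
proof
  show "w \<in> shuffle_words a b \<Longrightarrow> count_list w True = a \<and> count_list w False = b"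
    by (induction a b arbitrary: w rule: shuffle_words.induct) auto
  show "count_list w True = a \<and> count_list w False = b \<Longrightarrow> w \<in> shuffle_words a b"
  proof (induction w arbitrary: a b)
    case (Cons x w)
    then show ?case by (cases x; cases a; cases b) auto
  qed simp
qed

lemma true_vars_eq_true_pos:
  "1 \<le> k \<Longrightarrow> k \<le> count_list w True \<Longrightarrow> true_vars w \<tau> k = \<tau> (true_pos w k)"
proof (induction w arbitrary: \<tau> k)
  case (Cons x w)
  then show ?case
    using Cons.IH[of "k - 1"] Cons.IH[of k] by (cases x) (auto simp: shift_def)
qed simp

lemma false_vars_eq_true_pos:
  "1 \<le> k \<Longrightarrow> k \<le> count_list w False \<Longrightarrow> false_vars w \<tau> k = \<tau> (true_pos (map Not w) k)"
  unfolding false_vars_def by (rule true_vars_eq_true_pos) (simp_all add: count_list_map_Not)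

lemma true_pos_in_true_positions:
  "1 \<le> k \<Longrightarrow> k \<le> count_list w True \<Longrightarrow> true_pos w k \<in> true_positions w"
proof (induction w arbitrary: k)
  case (Cons x w)
  show ?case
  proof (cases x)
    case True
    then show ?thesis
      using Cons.IH[of "k - 1"] Cons.prems by (auto simp: true_positions_def nth_Cons')
  next
    case False
    then show ?thesis
      using Cons.IH[of k] Cons.prems by (auto simp: true_positions_def nth_Cons')
  qed
qed simp

lemma true_pos_strict_mono: "strict_mono_on {1..count_list w True} (true_pos w)"
proof -
  have "true_pos w k < true_pos w k'" if "1 \<le> k" "k < k'" "k' \<le> count_list w True" for k k'
    using that
  proof (induction w arbitrary: k k')
    case (Cons x w)
    show ?case
    proof (cases x)
      case True
      have "true_pos w (k' - 1) \<in> true_positions w"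
        using Cons.prems True by (intro true_pos_in_true_positions) auto
      then show ?thesis
        using Cons.IH[of "k - 1" "k' - 1"] Cons.prems True by (auto simp: true_positions_def)
    next
      case False
      then show ?thesis using Cons.IH[of k k'] Cons.prems by auto
    qed
  qed simp
  then show ?thesis by (auto simp: strict_mono_on_def)
qed

lemma true_pos_image: "true_pos w ` {1..count_list w True} = true_positions w"
proof
  show "true_pos w ` {1..count_list w True} \<subseteq> true_positions w"
    using true_pos_in_true_positions by auto
  show "true_positions w \<subseteq> true_pos w ` {1..count_list w True}"
  proof (induction w)
    case (Cons x w)
    show ?case
    proof
      fix j assume j: "j \<in> true_positions (x # w)"
      show "j \<in> true_pos (x # w) ` {1..count_list (x # w) True}"
      proof (cases "j = 1")
        case True
        then show ?thesis using j by (auto simp: true_positions_def intro: image_eqI[of _ _ 1])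
      next
        case False
        then have "j - 1 \<in> true_positions w" using j by (auto simp: true_positions_def)
        then obtain k where "k \<in> {1..count_list w True}" "true_pos w k = j - 1" using Cons.IH by auto
        then show ?thesis using False j
          by (cases x) (auto simp: true_positions_def intro: image_eqI[of _ _ "Suc k"] image_eqI[of _ _ k])
      qed
    qed
  qed (simp add: true_positions_def)
qed

lemma card_true_positions: "card (true_positions w) = count_list w True"
  using card_image[OF strict_mono_on_imp_inj_on[OF true_pos_strict_mono]] true_pos_image by simp

lemma true_positions_inj:
  assumes "length w = length w'" "true_positions w = true_positions w'"
  shows "w = w'"
proof (rule nth_equalityI)
  fix i assume "i < length w"
  then have "Suc i \<in> true_positions w \<longleftrightarrow> w ! i" "Suc i \<in> true_positions w' \<longleftrightarrow> w' ! i"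
    using assms(1) by (auto simp: true_positions_def)
  then show "w ! i = w' ! i" using assms(2) by simp
qed (rule assms(1))

lemma true_positions_map_Not: "true_positions (map Not w) = {1..length w} - true_positions w"
  by (auto simp: true_positions_def)

lemma sum_Pow_image:
  fixes h :: "'c set \<Rightarrow> 'b::comm_monoid_add"
  assumes "inj f"
  shows "(\<Sum>Y\<in>Pow (f ` A). h Y) = (\<Sum>Y\<in>Pow A. h (f ` Y))"
proof -
  have "inj_on (image f) (Pow A)"
    using assms by (auto intro!: inj_onI simp: inj_image_eq_iff)
  moreover have "image f ` Pow A = Pow (f ` A)"
  proof (intro equalityI subsetI)
    fix Z assume "Z \<in> Pow (f ` A)"
    then obtain Y where "Y \<subseteq> A" "Z = f ` Y" by (auto simp: subset_image_iff)
    then show "Z \<in> image f ` Pow A" by blast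
  qed auto
  ultimately show ?thesis using sum.reindex[of "image f" "Pow A" h] by simp
qed

text \<open>A shuffle word is determined by its set of \<open>True\<close> positions, so shuffle words of type
  \<open>(a, b)\<close> correspond to the \<open>a\<close>-element subsets of \<open>{1..a + b}\<close>.\<close>

lemma sum_Pow_eq_sum_shuffle_words:
  fixes h :: "nat set \<Rightarrow> 'b::comm_monoid_add"
  assumes "\<And>Y. Y \<subseteq> {1..a + b} \<Longrightarrow> card Y \<noteq> a \<Longrightarrow> h Y = 0"
  shows "(\<Sum>Y\<in>Pow {1..a + b}. h Y) = (\<Sum>w\<in>shuffle_words a b. h (true_positions w))"
proof -
  have "(\<Sum>Y\<in>Pow {1..a + b}. h Y) = (\<Sum>Y\<in>{Y\<in>Pow {1..a + b}. card Y = a}. h Y)"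
    using assms by (intro sum.mono_neutral_right) auto
  also have "\<dots> = (\<Sum>w\<in>shuffle_words a b. h (true_positions w))"
  proof (rule sum.reindex_bij_betw[symmetric], rule bij_betw_imageI)
    show "inj_on true_positions (shuffle_words a b)"
      by (rule inj_onI) (auto simp: shuffle_words_iff length_eq_count_True_False intro: true_positions_inj)
    show "true_positions ` shuffle_words a b = {Y \<in> Pow {1..a + b}. card Y = a}"
    proof (intro equalityI subsetI)
      fix Y assume "Y \<in> true_positions ` shuffle_words a b"
      then show "Y \<in> {Y \<in> Pow {1..a + b}. card Y = a}"
        using card_true_positions length_eq_count_True_False
        by (auto simp: shuffle_words_iff true_positions_def)
    next
      fix Y assume Y: "Y \<in> {Y \<in> Pow {1..a + b}. card Y = a}"
      define w where "w = map (\<lambda>j. j \<in> Y) [1..<a + b + 1]"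
      have "length w = a + b" by (simp add: w_def del: upt_Suc)
      moreover have "w ! (j - 1) \<longleftrightarrow> j \<in> Y" if "1 \<le> j" "j \<le> a + b" for j
        using that by (simp add: w_def del: upt_Suc) (subst nth_upt; simp)
      ultimately have "true_positions w = Y" using Y by (auto simp: true_positions_def)
      moreover have "w \<in> shuffle_words a b"
        using card_true_positions[of w] length_eq_count_True_False[of w] \<open>length w = a + b\<close>
          \<open>true_positions w = Y\<close> Y
        by (simp add: shuffle_words_iff)
      ultimately show "Y \<in> true_positions ` shuffle_words a b" by blast
    qed
  qed
  finally show ?thesis .
qed

section \<open>Families of bounded operators\<close>

lemma Baire_ball_in_closed_cover:
  fixes E :: "nat \<Rightarrow> 'a::banach set"
  assumes "\<And>n. closed (E n)" and "(\<Union>n. E n) = UNIV"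
  obtains n x0 r where "r > 0" "ball x0 r \<subseteq> E n"
proof -
  have "euclidean interior_of \<Union>(range E) \<noteq> {}"
    using assms(2) by (simp add: interior_of_openin)
  then obtain n where "interior (E n) \<noteq> {}"
    using Baire_category_alt[of euclidean "range E"] assms(1)
    by (auto simp: completely_metrizable_space_euclidean interior_of_openin)
  then show ?thesis using that mem_interior by blast
qed

lemma bounded_linear_norm_le_if_ball_bound:
  assumes L: "bounded_linear L" and r: "r > 0" and C: "\<And>y. norm y < r \<Longrightarrow> norm (L y) \<le> C"
  shows "norm (L x) \<le> (2 * C / r) * norm x"
proof (cases "x = 0")
  case True
  then show ?thesis using linear_0[OF bounded_linear.linear[OF L]] by simp
next
  case False
  define c where "c = r / (2 * norm x)"
  have c: "c > 0" "norm (c *\<^sub>R x) < r" using False r by (simp_all add: c_def)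
  have "c * norm (L x) = norm (L (c *\<^sub>R x))"
    using linear_scale[OF bounded_linear.linear[OF L]] c by simp
  also have "\<dots> \<le> C" by (rule C[OF c(2)])
  finally have "norm (L x) \<le> C / c" using c by (simp add: field_simps)
  also have "C / c = (2 * C / r) * norm x" using False r by (simp add: c_def field_simps)
  finally show ?thesis .
qed

lemma uniform_bound_if_pointwise_bounded:
  fixes L :: "'i \<Rightarrow> 'a::banach \<Rightarrow> 'b::real_normed_vector"
  assumes lin: "\<And>i. i \<in> I \<Longrightarrow> bounded_linear (L i)"
    and bnd: "\<And>x. bounded ((\<lambda>i. L i x) ` I)"
  shows "\<exists>B. \<forall>i\<in>I. \<forall>x. norm (L i x) \<le> B * norm x"
proof -
  define E where "E n = {x. \<forall>i\<in>I. norm (L i x) \<le> real n}" for n :: nat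
  have "closed {x. norm (L i x) \<le> real n}" if "i \<in> I" for i n
    by (intro closed_Collect_le continuous_on_norm linear_continuous_on[OF lin[OF that]]
        continuous_on_const)
  moreover have "E n = (\<Inter>i\<in>I. {x. norm (L i x) \<le> real n})" for n
    by (auto simp: E_def)
  ultimately have closed: "closed (E n)" for n
    by auto
  have "\<exists>n. x \<in> E n" for x
  proof -
    obtain M where "\<And>i. i \<in> I \<Longrightarrow> norm (L i x) \<le> M"
      using bnd[of x] by (auto simp: bounded_iff)
    moreover obtain n :: nat where "M \<le> real n" using real_arch_simple by blast
    ultimately have "x \<in> E n" by (auto simp: E_def intro: order_trans)
    then show ?thesis ..
  qed
  then have "(\<Union>n. E n) = UNIV" by blast
  with closed obtain n x0 r where r: "r > 0" "ball x0 r \<subseteq> E n"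
    by (rule Baire_ball_in_closed_cover)
  have small: "norm (L i y) \<le> 2 * real n" if i: "i \<in> I" and y: "norm y < r" for i y
  proof -
    have "x0 + y \<in> E n" "x0 \<in> E n" using r y by (auto simp: dist_norm)
    then have "norm (L i (x0 + y)) \<le> real n" "norm (L i x0) \<le> real n" using i by (auto simp: E_def)
    moreover have "L i y = L i (x0 + y) - L i x0"
      using linear_add[OF bounded_linear.linear[OF lin[OF i]]] by simp
    ultimately show ?thesis using norm_triangle_ineq4[of "L i (x0 + y)" "L i x0"] by simp
  qed
  have "norm (L i x) \<le> (2 * (2 * real n) / r) * norm x" if "i \<in> I" for i x
    using small that by (intro bounded_linear_norm_le_if_ball_bound[OF lin r(1)]) auto
  then show ?thesis by blast
qed

lemma continuous_on_bounded_linear_family: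
  fixes H :: "'t::heine_borel \<Rightarrow> 'a::banach \<Rightarrow> 'b::real_normed_vector"
  assumes lin: "\<And>t. bounded_linear (H t)" and cont: "\<And>x. continuous_on UNIV (\<lambda>t. H t x)"
  shows "continuous_on UNIV (\<lambda>(t, x). H t x)"
proof (clarsimp simp: continuous_on_iff)
  fix t :: 't and x :: 'a and e :: real
  assume e: "0 < e"
  have "bounded ((\<lambda>t'. H t' y) ` cball t 1)" for y
    by (intro compact_imp_bounded compact_continuous_image continuous_on_subset[OF cont]) auto
  from uniform_bound_if_pointwise_bounded[OF lin this]
  obtain B0 where B0: "\<And>t' y. t' \<in> cball t 1 \<Longrightarrow> norm (H t' y) \<le> B0 * norm y"
    by blast
  define B where "B = max B0 0"
  have B: "norm (H t' y) \<le> B * norm y" if "t' \<in> cball t 1" for t' y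
  proof -
    have "norm (H t' y) \<le> B0 * norm y" by (rule B0[OF that])
    also have "\<dots> \<le> B * norm y" by (intro mult_right_mono) (auto simp: B_def)
    finally show ?thesis .
  qed
  obtain d1 where d1: "d1 > 0" "\<And>t'. dist t' t < d1 \<Longrightarrow> dist (H t' x) (H t x) < e / 2"
    using cont[of x] e unfolding continuous_on_iff by (metis UNIV_I half_gt_zero)
  define d where "d = min 1 (min d1 (e / (2 * (B + 1))))"
  have "B \<ge> 0" by (simp add: B_def)
  then have d: "d > 0" using d1 e by (simp add: d_def)
  show "\<exists>d>0. \<forall>a b. dist (a, b) (t, x) < d \<longrightarrow> dist (H a b) (H t x) < e"
  proof (intro exI conjI allI impI, fact d)
    fix t' x' assume "dist (t', x') (t, x) < d"
    then have dt: "dist t' t < d" and dx: "dist x' x < d"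
      by (auto simp: dist_Pair_Pair intro: le_less_trans[OF real_sqrt_sum_squares_ge1]
          le_less_trans[OF real_sqrt_sum_squares_ge2])
    have t': "t' \<in> cball t 1" using dt by (simp add: d_def dist_commute)
    have "H t' x' - H t x = H t' (x' - x) + (H t' x - H t x)"
      using linear_diff[OF bounded_linear.linear[OF lin], of t' x' x] by simp
    then have "dist (H t' x') (H t x) \<le> norm (H t' (x' - x)) + dist (H t' x) (H t x)"
      unfolding dist_norm by (metis add_diff_eq norm_triangle_ineq)
    also have "norm (H t' (x' - x)) \<le> B * norm (x' - x)" by (rule B[OF t'])
    also have "B * norm (x' - x) \<le> B * (e / (2 * (B + 1)))"
      using dx \<open>B \<ge> 0\<close> by (intro mult_left_mono) (auto simp: dist_norm d_def)
    also have "B * (e / (2 * (B + 1))) \<le> e / 2"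
      using \<open>B \<ge> 0\<close> e by (simp add: field_simps)
    also have "dist (H t' x) (H t x) < e / 2" using dt d1 by (simp add: d_def)
    finally show "dist (H t' x') (H t x) < e" by simp
  qed
qed

subclass (in complex_hilbert) banach ..

lemma bounded_linear_imul: "bounded_linear (imul :: 'a::complex_hilbert \<Rightarrow> 'a)"
proof -
  have "norm (imul x) = norm x" for x :: 'a
    by (simp add: norm_eq_sqrt_inner imul_inner)
  then show ?thesis
    by (intro bounded_linear_intro[where K=1]) (simp_all add: imul_add imul_scaleR)
qed

lemma imul_minus: "imul (- x) = - imul (x::'a::complex_hilbert)"
  by (rule linear_neg[OF bounded_linear.linear[OF bounded_linear_imul]])

lemma imul_diff: "imul (x - y) = imul x - imul (y::'a::complex_hilbert)"
  by (rule linear_diff[OF bounded_linear.linear[OF bounded_linear_imul]])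

lemma imul_sum: "imul (\<Sum>i\<in>I. f i) = (\<Sum>i\<in>I. imul (f i :: 'a::complex_hilbert))"
  by (rule linear_sum[OF bounded_linear.linear[OF bounded_linear_imul]])

text \<open>Each factor \<open>X\<^sup>\<sigma>\<^sub>p(s)\<close> is \<open>-\<i>Q H(s)\<close> or \<open>\<i>P H(s)\<close>, possibly followed by \<open>P\<close> on the right;
  the first alternative is taken at ascents of \<open>\<sigma>\<close> (and always for \<open>p = 1\<close>), the projection
  \<open>P\<close> is applied only by the last factor.\<close>

definition ascent :: "nat \<Rightarrow> (nat \<Rightarrow> nat) \<Rightarrow> nat \<Rightarrow> bool" where
  "ascent n \<sigma> p \<longleftrightarrow> n = 1 \<or> p = 1 \<or> \<sigma> (p - 1) < \<sigma> p"

definition last_factor :: "nat \<Rightarrow> nat \<Rightarrow> bool" where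
  "last_factor n p \<longleftrightarrow> n = 1 \<or> (p \<noteq> 1 \<and> \<not> p < n)"

locale hamiltonian_projection =
  fixes H :: "real \<Rightarrow> 'a::complex_hilbert \<Rightarrow> 'a" and P :: "'a \<Rightarrow> 'a"
  assumes H_sa: "\<forall>t. bounded_selfadjoint (H t)"
    and H_cont: "\<forall>\<psi>. continuous_on UNIV (\<lambda>t. H t \<psi>)"
    and P_proj: "orth_projection P"
begin

lemma bounded_linear_H: "bounded_linear (H t)"
  using H_sa by (simp add: bounded_selfadjoint_def bounded_clinear_op_def)

lemma H_imul: "H t (imul x) = imul (H t x)"
  using H_sa by (simp add: bounded_selfadjoint_def bounded_clinear_op_def)

lemma bounded_linear_P: "bounded_linear P"
  using P_proj by (simp add: orth_projection_def bounded_selfadjoint_def bounded_clinear_op_def)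

lemma P_imul: "P (imul x) = imul (P x)"
  using P_proj by (simp add: orth_projection_def bounded_selfadjoint_def bounded_clinear_op_def)

lemma P_idem [simp]: "P (P x) = P x"
  using P_proj by (simp add: orth_projection_def)

lemma continuous_on_H: "continuous_on UNIV (\<lambda>(t, x). H t x)"
  using H_cont by (intro continuous_on_bounded_linear_family bounded_linear_H) blast

lemma continuous_on_H_comp:
  "continuous_on S f \<Longrightarrow> continuous_on S g \<Longrightarrow> continuous_on S (\<lambda>x. H (f x) (g x))"
  by (rule continuous_on_compose_curried[OF continuous_on_H])

definition QP_op :: "bool \<Rightarrow> 'a \<Rightarrow> 'a" where
  "QP_op c y = (if c then - imul (y - P y) else imul (P y))"

definition P_if :: "bool \<Rightarrow> 'a \<Rightarrow> 'a" where
  "P_if b v = (if b then P v else v)"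

lemma Xfac_eq: "Xfac H P n \<sigma> p s v = QP_op (ascent n \<sigma> p) (H s (P_if (last_factor n p) v))"
  by (auto simp: Xfac_def Let_def QP_op_def ascent_def last_factor_def P_if_def)

lemma bounded_linear_QP_op: "bounded_linear (QP_op c)"
  unfolding QP_op_def
  by (cases c) (simp_all add: bounded_linear_minus bounded_linear_compose[OF bounded_linear_imul]
      bounded_linear_sub bounded_linear_ident bounded_linear_P)

lemma bounded_linear_P_if: "bounded_linear (P_if b)"
  unfolding P_if_def by (cases b) (simp_all add: bounded_linear_P bounded_linear_ident[unfolded id_def])

lemma bounded_linear_Xfac: "bounded_linear (Xfac H P n \<sigma> p s)"
  unfolding Xfac_eq[abs_def]
  by (rule bounded_linear_compose[OF bounded_linear_QP_op
        bounded_linear_compose[OF bounded_linear_H bounded_linear_P_if]])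

lemma Xfac_imul: "Xfac H P n \<sigma> p s (imul v) = imul (Xfac H P n \<sigma> p s v)"
  by (simp add: Xfac_eq P_if_def QP_op_def H_imul P_imul imul_diff imul_minus)

lemma continuous_on_Xfac: "continuous_on UNIV (\<lambda>(s, v). Xfac H P n \<sigma> p s v)"
  unfolding Xfac_eq split_beta
  by (intro continuous_on_compose_UNIV[OF linear_continuous_on[OF bounded_linear_QP_op]]
      continuous_on_H_comp continuous_intros
      continuous_on_compose_UNIV[OF linear_continuous_on[OF bounded_linear_P_if]])

lemma continuous_on_Xprod: "continuous_on UNIV (\<lambda>(\<tau>, \<psi>). Xprod H P n \<sigma> \<tau> \<psi>)"
proof -
  have "continuous_on UNIV (\<lambda>(\<tau>, \<psi>). foldr (\<lambda>p. Xfac H P n \<sigma> p (\<tau> (\<sigma> p))) ps \<psi>)" for ps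
  proof (induction ps)
    case (Cons p ps)
    have "continuous_on UNIV (\<lambda>x::(nat \<Rightarrow> real) \<times> 'a. (\<lambda>(s, v). Xfac H P n \<sigma> p s v)
        (fst x (\<sigma> p), (\<lambda>(\<tau>, \<psi>). foldr (\<lambda>p. Xfac H P n \<sigma> p (\<tau> (\<sigma> p))) ps \<psi>) x))"
      by (intro continuous_on_compose_UNIV[OF continuous_on_Xfac] continuous_on_Pair Cons.IH
          continuous_on_product_then_coordinatewise[OF continuous_on_fst_id])
    then show ?case by (simp add: split_beta)
  qed (simp add: split_beta continuous_on_snd_id)
  then show ?thesis by (simp add: Xprod_def)
qed

lemma continuous_on_Xprod_comp:
  "continuous_on S f \<Longrightarrow> continuous_on S g \<Longrightarrow> continuous_on S (\<lambda>x. Xprod H P n \<sigma> (f x) (g x))"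
  by (rule continuous_on_compose_curried[OF continuous_on_Xprod])

lemma bounded_linear_Xprod: "bounded_linear (Xprod H P n \<sigma> \<tau>)"
proof -
  have "bounded_linear (foldr (\<lambda>p. Xfac H P n \<sigma> p (\<tau> (\<sigma> p))) ps)" for ps
    by (induction ps) (simp_all add: bounded_linear_ident bounded_linear_compose[OF bounded_linear_Xfac])
  then show ?thesis by (simp add: Xprod_def[abs_def])
qed

lemma Xprod_imul: "Xprod H P n \<sigma> \<tau> (imul \<psi>) = imul (Xprod H P n \<sigma> \<tau> \<psi>)"
proof -
  have "foldr (\<lambda>p. Xfac H P n \<sigma> p (\<tau> (\<sigma> p))) ps (imul \<psi>) =
      imul (foldr (\<lambda>p. Xfac H P n \<sigma> p (\<tau> (\<sigma> p))) ps \<psi>)" for ps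
    by (induction ps) (simp_all add: Xfac_imul)
  then show ?thesis by (simp add: Xprod_def)
qed

lemma Xprod_P:
  assumes "n \<ge> 1"
  shows "Xprod H P n \<sigma> \<tau> (P \<psi>) = Xprod H P n \<sigma> \<tau> \<psi>"
proof -
  have "[1..<n + 1] = [1..<n] @ [n]" using assms by simp
  moreover have "last_factor n n" using assms by (simp add: last_factor_def)
  ultimately show ?thesis by (simp add: Xprod_def Xfac_eq P_if_def)
qed

lemma imul_Xprod:
  assumes "n \<ge> 1"
  shows "imul (Xprod H P n \<sigma> \<tau> y) = Xprod H P n \<sigma> \<tau> (imul (P y))"
  using Xprod_imul Xprod_P[OF assms] P_imul by metis

lemma Xprod_cong:
  assumes "\<And>p. 1 \<le> p \<Longrightarrow> p \<le> n \<Longrightarrow> \<sigma> p = \<sigma>' p"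
  shows "Xprod H P n \<sigma> = Xprod H P n \<sigma>'"
proof -
  have "Xfac H P n \<sigma> p (\<tau> (\<sigma> p)) = Xfac H P n \<sigma>' p (\<tau> (\<sigma>' p))" if "p \<in> set [1..<n+1]" for p \<tau>
  proof -
    have p: "1 \<le> p" "p \<le> n" using that by auto
    then have "ascent n \<sigma> p = ascent n \<sigma>' p"
      using assms by (cases "p = 1") (auto simp: ascent_def)
    then show ?thesis using assms[OF p] by (simp add: Xfac_eq[abs_def])
  qed
  then show ?thesis unfolding Xprod_def by (intro ext foldr_cong) auto
qed

end

section \<open>Trees of lists of distinct numbers\<close>

declare phi.simps [simp del]

lemma phi_Nil [simp]: "phi [] = Leaf"
  by (simp add: phi.simps)

definition min_index :: "nat list \<Rightarrow> nat" where
  "min_index xs = (LEAST j. j < length xs \<and> xs ! j = Min (set xs))"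

lemma min_index:
  assumes "xs \<noteq> []"
  shows "min_index xs < length xs" "xs ! min_index xs = Min (set xs)"
proof -
  have "\<exists>j. j < length xs \<and> xs ! j = Min (set xs)"
    using assms by (simp add: in_set_conv_nth[symmetric])
  then have "min_index xs < length xs \<and> xs ! min_index xs = Min (set xs)"
    unfolding min_index_def by (rule LeastI_ex)
  then show "min_index xs < length xs" "xs ! min_index xs = Min (set xs)" by auto
qed

lemma phi_nonempty:
  "xs \<noteq> [] \<Longrightarrow> phi xs = Graft (phi (take (min_index xs) xs)) (phi (drop (Suc (min_index xs)) xs))"
  by (subst phi.simps) (simp add: min_index_def Let_def)

lemma tsize_ge_1: "T \<noteq> Leaf \<Longrightarrow> tsize T \<ge> 1"
  by (cases T) auto

lemma tsize_phi: "tsize (phi xs) = length xs"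
proof (induction xs rule: length_induct)
  case (1 xs)
  show ?case
  proof (cases "xs = []")
    case False
    with 1 min_index(1)[OF False] show ?thesis by (simp add: phi_nonempty)
  qed simp
qed

lemma phi_append_Min:
  assumes "\<And>x. x \<in> set ys \<Longrightarrow> m < x" "\<And>x. x \<in> set zs \<Longrightarrow> m < x"
  shows "phi (ys @ [m] @ zs) = Graft (phi ys) (phi zs)"
proof -
  let ?xs = "ys @ [m] @ zs"
  have "Min (set ?xs) = m"
    using assms by (intro Min_eqI) (auto intro: less_imp_le)
  moreover have "\<not> (j < length ?xs \<and> ?xs ! j = m)" if "j < length ys" for j
    using that assms(1)[of "ys ! j"] by (auto simp: nth_append)
  ultimately have "min_index ?xs = length ys"
    unfolding min_index_def by (intro Least_equality) (auto simp: not_less[symmetric])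
  then show ?thesis using phi_nonempty[of ?xs] by simp
qed

lemma phi_map_strict_mono:
  assumes "strict_mono_on (set xs) f"
  shows "phi (map f xs) = phi xs"
  using assms
proof (induction xs rule: length_induct)
  case (1 xs)
  show ?case
  proof (cases "xs = []")
    case False
    let ?i = "min_index xs"
    have fin: "finite (set xs)" "set xs \<noteq> {}" using False by auto
    have "Min (set (map f xs)) = f (Min (set xs))"
      using "1.prems" fin by (auto intro!: Min_eqI simp: strict_mono_on_leD)
    moreover have "inj_on f (set xs)" using "1.prems" strict_mono_on_imp_inj_on by blast
    ultimately have "map f xs ! j = Min (set (map f xs)) \<longleftrightarrow> xs ! j = Min (set xs)"
      if "j < length xs" for j
      using that fin by (auto simp: inj_on_eq_iff)
    then have "min_index (map f xs) = ?i"
      unfolding min_index_def by (metis length_map)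
    moreover have "strict_mono_on (set (take ?i xs)) f" "strict_mono_on (set (drop (Suc ?i) xs)) f"
      using "1.prems" monotone_on_subset set_take_subset set_drop_subset by metis+
    ultimately show ?thesis
      using 1 min_index(1)[OF False] False by (simp add: phi_nonempty take_map drop_map)
  qed simp
qed

text \<open>The lists \<open>xs\<close> with \<open>phi xs = T\<close> enumerating a set \<open>V\<close>; for \<open>V = {1..n}\<close> these are the
  permutations in \<open>S_T T\<close> written as words.\<close>

definition arrangements :: "tree \<Rightarrow> nat set \<Rightarrow> nat list set" where
  "arrangements T V = {xs. distinct xs \<and> set xs = V \<and> phi xs = T}"

lemma length_arrangements: "xs \<in> arrangements T V \<Longrightarrow> length xs = tsize T \<and> card V = tsize T"
  by (auto simp: arrangements_def tsize_phi distinct_card)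

lemma finite_arrangements: "finite V \<Longrightarrow> finite (arrangements T V)"
proof -
  assume V: "finite V"
  have "arrangements T V \<subseteq> {xs. set xs \<subseteq> V \<and> length xs \<le> card V}"
    by (auto simp: arrangements_def distinct_card)
  then show ?thesis using finite_lists_length_le[OF V] finite_subset by blast
qed

lemma arrangements_Leaf: "arrangements Leaf {} = {[]}"
  by (auto simp: arrangements_def)

lemma arrangements_eq_empty: "card V \<noteq> tsize T \<Longrightarrow> arrangements T V = {}"
  using length_arrangements by blast

lemma arrangements_Graft_split:
  assumes xs: "xs \<in> arrangements (Graft T1 T2) V" and m: "Min V = m"
  obtains ys zs where "xs = ys @ [m] @ zs" "ys \<in> arrangements T1 (set ys)"
    "zs \<in> arrangements T2 (V - {m} - set ys)" "set ys \<subseteq> V - {m}"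
proof -
  have d: "distinct xs" "set xs = V" "phi xs = Graft T1 T2"
    using xs by (auto simp: arrangements_def)
  then have ne: "xs \<noteq> []" by auto
  define i where "i = min_index xs"
  have "i < length xs" "xs ! i = m" using min_index[OF ne] d m by (auto simp: i_def)
  then have split: "xs = take i xs @ [m] @ drop (Suc i) xs"
    using id_take_nth_drop by fastforce
  have "phi (take i xs) = T1" "phi (drop (Suc i) xs) = T2"
    using d(3) phi_nonempty[OF ne] by (auto simp: i_def)
  moreover have "distinct (take i xs @ [m] @ drop (Suc i) xs)"
    "set (take i xs @ [m] @ drop (Suc i) xs) = V"
    using d(1,2) by (simp_all only: split[symmetric])
  ultimately show ?thesis
    using split by (intro that[of "take i xs" "drop (Suc i) xs"]) (auto simp: arrangements_def)
qed

lemma bij_betw_arrangements_Graft: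
  assumes V: "finite V" and m: "m \<in> V" "\<And>x. x \<in> V - {m} \<Longrightarrow> m < x"
  shows "bij_betw (\<lambda>(Y, ys, zs). ys @ [m] @ zs)
    (SIGMA Y:Pow (V - {m}). arrangements T1 Y \<times> arrangements T2 (V - {m} - Y))
    (arrangements (Graft T1 T2) V)"
    (is "bij_betw ?h ?D _")
proof (rule bij_betw_imageI)
  show "inj_on ?h ?D"
  proof (rule inj_onI)
    fix p q assume "p \<in> ?D" "q \<in> ?D" and eq: "?h p = ?h q"
    obtain Y ys zs Y' ys' zs' where pq: "p = (Y, ys, zs)" "q = (Y', ys', zs')"
      by (cases p, cases q) auto
    have "m \<notin> set ys" "m \<notin> set zs" "Y = set ys" "Y' = set ys'"
      using \<open>p \<in> ?D\<close> \<open>q \<in> ?D\<close> by (auto simp: arrangements_def pq)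
    moreover have "ys @ m # zs = ys' @ m # zs'" using eq by (simp add: pq)
    ultimately show "p = q"
      using append_Cons_eq_iff[of m ys zs ys' zs'] by (simp add: pq)
  qed
  show "?h ` ?D = arrangements (Graft T1 T2) V"
  proof (intro equalityI subsetI)
    fix xs assume "xs \<in> ?h ` ?D"
    then obtain Y ys zs where Y: "Y \<subseteq> V - {m}" and ys: "ys \<in> arrangements T1 Y"
      and zs: "zs \<in> arrangements T2 (V - {m} - Y)" and xs: "xs = ys @ [m] @ zs"
      by auto
    have sys: "set ys = Y" "distinct ys" "phi ys = T1" using ys by (auto simp: arrangements_def)
    have szs: "set zs = V - {m} - Y" "distinct zs" "phi zs = T2" using zs by (auto simp: arrangements_def)
    have "distinct xs" "set xs = V" using sys szs Y m(1) by (auto simp: xs)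
    moreover have "phi xs = Graft T1 T2"
      unfolding xs using sys szs Y m(2) by (subst phi_append_Min) auto
    ultimately show "xs \<in> arrangements (Graft T1 T2) V" by (simp add: arrangements_def)
  next
    fix xs assume "xs \<in> arrangements (Graft T1 T2) V"
    moreover have "Min V = m" using V m by (intro Min_eqI) (auto intro: less_imp_le)
    ultimately obtain ys zs where "xs = ys @ [m] @ zs" "ys \<in> arrangements T1 (set ys)"
      "zs \<in> arrangements T2 (V - {m} - set ys)" "set ys \<subseteq> V - {m}"
      by (rule arrangements_Graft_split)
    then show "xs \<in> ?h ` ?D"
      by (intro image_eqI[where f = ?h and x = "(set ys, ys, zs)"]) auto
  qed
qed

lemma sum_arrangements_Graft:
  fixes F :: "nat list \<Rightarrow> 'b::comm_monoid_add"
  assumes V: "finite V" and m: "m \<in> V" "\<And>x. x \<in> V - {m} \<Longrightarrow> m < x"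
  shows "(\<Sum>xs\<in>arrangements (Graft T1 T2) V. F xs) =
    (\<Sum>Y\<in>Pow (V - {m}). \<Sum>ys\<in>arrangements T1 Y. \<Sum>zs\<in>arrangements T2 (V - {m} - Y). F (ys @ [m] @ zs))"
proof -
  have "\<forall>Y\<in>Pow (V - {m}). finite (arrangements T1 Y \<times> arrangements T2 (V - {m} - Y))"
    using V by (auto intro!: finite_arrangements finite_subset[of _ V])
  then have "(\<Sum>Y\<in>Pow (V - {m}). \<Sum>ys\<in>arrangements T1 Y. \<Sum>zs\<in>arrangements T2 (V - {m} - Y).
        F (ys @ [m] @ zs))
      = (\<Sum>(Y, ys, zs)\<in>(SIGMA Y:Pow (V - {m}). arrangements T1 Y \<times> arrangements T2 (V - {m} - Y)).
        F (ys @ [m] @ zs))"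
    using V by (simp add: sum.cartesian_product sum.Sigma split_beta)
  also have "\<dots> = (\<Sum>xs\<in>arrangements (Graft T1 T2) V. F xs)"
    using sum.reindex_bij_betw[OF bij_betw_arrangements_Graft[OF assms], of F]
    by (simp add: split_beta)
  finally show ?thesis by simp
qed

lemma sum_arrangements_image:
  fixes G :: "nat list \<Rightarrow> 'b::comm_monoid_add"
  assumes f: "strict_mono_on A f"
  shows "(\<Sum>ys\<in>arrangements T (f ` A). G ys) = (\<Sum>xs\<in>arrangements T A. G (map f xs))"
proof -
  have inj: "inj_on f A" using f strict_mono_on_imp_inj_on by blast
  have "map f ` arrangements T A = arrangements T (f ` A)"
  proof (intro equalityI subsetI)
    fix ys assume "ys \<in> map f ` arrangements T A"
    then obtain xs where xs: "xs \<in> arrangements T A" and ys: "ys = map f xs" by blast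
    have "strict_mono_on (set xs) f" using xs f by (auto simp: arrangements_def)
    then show "ys \<in> arrangements T (f ` A)"
      using xs inj by (auto simp: arrangements_def ys distinct_map phi_map_strict_mono)
  next
    fix ys assume ys: "ys \<in> arrangements T (f ` A)"
    define xs where "xs = map (inv_into A f) ys"
    have "map f xs = ys"
      using ys by (auto simp: xs_def arrangements_def f_inv_into_f intro: map_idI)
    moreover have "set xs = A"
      using ys inj by (simp add: xs_def arrangements_def inv_into_image_cancel)
    ultimately have "xs \<in> arrangements T A"
      using ys f by (auto simp: arrangements_def distinct_map phi_map_strict_mono[symmetric])
    with \<open>map f xs = ys\<close> show "ys \<in> map f ` arrangements T A" by blast
  qed
  moreover have "inj_on (map f) (arrangements T A)"
  proof (rule inj_onI)
    fix xs ys assume "xs \<in> arrangements T A" "ys \<in> arrangements T A" "map f xs = map f ys"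
    then show "xs = ys" using inj_on_map_eq_map[of f xs ys] inj by (auto simp: arrangements_def)
  qed
  ultimately show ?thesis
    using sum.reindex[of "map f" "arrangements T A" G] by simp
qed

lemma bij_betw_permutes_lists:
  "bij_betw (\<lambda>\<sigma>. map \<sigma> [1..<n + 1]) {\<sigma>. \<sigma> permutes {1..n}} {xs. distinct xs \<and> set xs = {1..n}}"
proof (rule bij_betw_imageI)
  have su: "set [1..<n + 1] = {1..n}" by auto
  show "inj_on (\<lambda>\<sigma>. map \<sigma> [1..<n + 1]) {\<sigma>. \<sigma> permutes {1..n}}"
  proof (rule inj_onI, rule ext)
    fix \<sigma> \<sigma>' x assume "\<sigma> \<in> {\<sigma>. \<sigma> permutes {1..n}}" "\<sigma>' \<in> {\<sigma>. \<sigma> permutes {1..n}}"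
      and "map \<sigma> [1..<n + 1] = map \<sigma>' [1..<n + 1]"
    then show "\<sigma> x = \<sigma>' x"
      using su by (cases "x \<in> {1..n}") (auto simp: permutes_not_in map_eq_conv simp del: upt_Suc)
  qed
  show "(\<lambda>\<sigma>. map \<sigma> [1..<n + 1]) ` {\<sigma>. \<sigma> permutes {1..n}} = {xs. distinct xs \<and> set xs = {1..n}}"
  proof (intro equalityI subsetI)
    fix xs assume "xs \<in> (\<lambda>\<sigma>. map \<sigma> [1..<n + 1]) ` {\<sigma>. \<sigma> permutes {1..n}}"
    then show "xs \<in> {xs. distinct xs \<and> set xs = {1..n}}"
      using su by (auto simp: distinct_map permutes_inj_on permutes_image simp del: upt_Suc)
  next
    fix xs assume "xs \<in> {xs. distinct xs \<and> set xs = {1..n}}"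
    then have d: "distinct xs" "set xs = {1..n}" by auto
    then have lx: "length xs = n" using distinct_card by fastforce
    define \<sigma> where "\<sigma> p = (if p \<in> {1..n} then xs ! (p - 1) else p)" for p
    have m: "map \<sigma> [1..<n + 1] = xs"
      using lx by (intro nth_equalityI) (simp_all add: \<sigma>_def nth_upt del: upt_Suc)
    then have "\<sigma> ` {1..n} = {1..n}"
      using su d(2) by (metis set_map \<sigma>_def image_cong)
    moreover have "inj_on \<sigma> {1..n}"
    proof (rule inj_onI)
      fix p q assume "p \<in> {1..n}" "q \<in> {1..n}" "\<sigma> p = \<sigma> q"
      then have "xs ! (p - 1) = xs ! (q - 1)" "p - 1 < length xs" "q - 1 < length xs"
        using lx by (auto simp: \<sigma>_def)
      then have "p - 1 = q - 1" using d(1) nth_eq_iff_index_eq by blast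
      then show "p = q" using \<open>p \<in> {1..n}\<close> \<open>q \<in> {1..n}\<close> by auto
    qed
    ultimately have "\<sigma> permutes {1..n}"
      by (intro bij_imp_permutes) (auto simp: bij_betw_def \<sigma>_def)
    with m show "xs \<in> (\<lambda>\<sigma>. map \<sigma> [1..<n + 1]) ` {\<sigma>. \<sigma> permutes {1..n}}" by force
  qed
qed

lemma bij_betw_S_T_arrangements:
  "bij_betw (\<lambda>\<sigma>. map \<sigma> [1..<tsize T + 1]) (S_T T) (arrangements T {1..tsize T})"
proof -
  have "S_T T = {\<sigma> \<in> {\<sigma>. \<sigma> permutes {1..tsize T}}. phi (map \<sigma> [1..<tsize T + 1]) = T}"
    "arrangements T {1..tsize T} = {xs \<in> {xs. distinct xs \<and> set xs = {1..tsize T}}. phi xs = T}"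
    by (auto simp: S_T_def arrangements_def)
  then show ?thesis
    by (simp only:) (rule bij_betw_Collect[OF bij_betw_permutes_lists], simp)
qed

definition nth1 :: "nat list \<Rightarrow> nat \<Rightarrow> nat" where
  "nth1 xs p = xs ! (p - 1)"

lemma nth1_in_set: "1 \<le> p \<Longrightarrow> p \<le> length xs \<Longrightarrow> nth1 xs p \<in> set xs"
  by (simp add: nth1_def)

lemma nth1_image: "nth1 xs ` {1..length xs} = set xs"
proof
  show "nth1 xs ` {1..length xs} \<subseteq> set xs" by (auto simp: nth1_def)
  show "set xs \<subseteq> nth1 xs ` {1..length xs}"
  proof
    fix y assume "y \<in> set xs"
    then obtain i where "i < length xs" "xs ! i = y" by (auto simp: in_set_conv_nth)
    then show "y \<in> nth1 xs ` {1..length xs}" by (intro image_eqI[of _ _ "Suc i"]) (auto simp: nth1_def)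
  qed
qed

lemma nth1_upt: "p \<le> n \<Longrightarrow> 1 \<le> p \<Longrightarrow> nth1 (map \<sigma> [1..<n + 1]) p = \<sigma> p"
  by (simp add: nth1_def nth_upt del: upt_Suc)

lemma upt_split_at: "[1..<a + b + 2] = [1..<a + 1] @ [a + 1] @ map (\<lambda>q. q + (a + 1)) [1..<b + 1]"
  by (induction b) auto

lemma ascent_block:
  fixes \<sigma> \<sigma>' h :: "nat \<Rightarrow> nat"
  assumes \<sigma>: "\<And>q. 1 \<le> q \<Longrightarrow> q \<le> m \<Longrightarrow> \<sigma> (q + d) = h (\<sigma>' q)"
    and h: "\<And>i j. i \<in> \<sigma>' ` {1..m} \<Longrightarrow> j \<in> \<sigma>' ` {1..m} \<Longrightarrow> h i < h j \<longleftrightarrow> i < j"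
    and p: "2 \<le> p" "p \<le> m" and "n \<noteq> 1"
  shows "ascent n \<sigma> (p + d) \<longleftrightarrow> ascent m \<sigma>' p"
proof -
  have "\<sigma> (p + d - 1) = h (\<sigma>' (p - 1))"
    using \<sigma>[of "p - 1"] p by (simp add: Suc_diff_le)
  moreover have "h (\<sigma>' (p - 1)) < h (\<sigma>' p) \<longleftrightarrow> \<sigma>' (p - 1) < \<sigma>' p"
    using p by (intro h imageI) auto
  ultimately show ?thesis
    using assms \<sigma>[of p] by (auto simp: ascent_def)
qed

context hamiltonian_projection
begin

lemma Xfac_cong:
  "ascent n \<sigma> p \<longleftrightarrow> ascent m \<sigma>' q \<Longrightarrow> last_factor n p \<longleftrightarrow> last_factor m q \<Longrightarrow>
    Xfac H P n \<sigma> p s = Xfac H P m \<sigma>' q s"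
  by (simp add: Xfac_eq[abs_def])

text \<open>The integrand of the outermost integral of \<open>\<Omega>\<^bsub>T\<^sub>1 \<or> T\<^sub>2\<^esub>\<close> in the three cases
  \<open>T\<^sub>1 = |\<close>, \<open>T\<^sub>2 = |\<close> and neither, for words \<open>\<alpha>\<close> of \<open>T\<^sub>1\<close> and \<open>\<beta>\<close> of \<open>T\<^sub>2\<close>.\<close>

definition Graft_integrand :: "nat list \<Rightarrow> nat list \<Rightarrow> 'a \<Rightarrow> real \<Rightarrow> (nat \<Rightarrow> real) \<Rightarrow> (nat \<Rightarrow> real) \<Rightarrow> 'a"
  where "Graft_integrand \<alpha> \<beta> \<psi> s u v =
    (if \<alpha> = [] then - imul (H s (Xprod H P (length \<beta>) (nth1 \<beta>) v \<psi>) - P (H s (Xprod H P (length \<beta>) (nth1 \<beta>) v \<psi>)))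
     else if \<beta> = [] then Xprod H P (length \<alpha>) (nth1 \<alpha>) u (imul (P (H s (P \<psi>))))
     else Xprod H P (length \<alpha>) (nth1 \<alpha>) u (imul (P (H s (Xprod H P (length \<beta>) (nth1 \<beta>) v \<psi>)))))"

text \<open>Let the minimum \<open>1\<close> of a word sit between a word of length \<open>a\<close> and one of length \<open>b\<close>, which
  are order-isomorphic (via \<open>f\<close> and \<open>g\<close>) to \<open>\<alpha>\<close> and \<open>\<beta>\<close>. Then the factors to the left of the minimum
  are those of \<open>\<alpha>\<close>, the factors to its right those of \<open>\<beta>\<close>, and the factor at the minimum is the
  operator that glues the two products together.\<close>

context
  fixes \<alpha> \<beta> xs :: "nat list" and f g :: "nat \<Rightarrow> nat" and \<tau> u v :: "nat \<Rightarrow> real" and s :: real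
  assumes xs: "xs = map f \<alpha> @ [1] @ map g \<beta>"
    and f_less_iff: "\<And>i j. i \<in> set \<alpha> \<Longrightarrow> j \<in> set \<alpha> \<Longrightarrow> f i < f j \<longleftrightarrow> i < j"
    and g_less_iff: "\<And>i j. i \<in> set \<beta> \<Longrightarrow> j \<in> set \<beta> \<Longrightarrow> g i < g j \<longleftrightarrow> i < j"
    and f_ge: "\<And>i. i \<in> set \<alpha> \<Longrightarrow> 2 \<le> f i" and g_ge: "\<And>i. i \<in> set \<beta> \<Longrightarrow> 2 \<le> g i"
    and \<tau>_f: "\<And>i. i \<in> set \<alpha> \<Longrightarrow> \<tau> (f i) = u i" and \<tau>_g: "\<And>i. i \<in> set \<beta> \<Longrightarrow> \<tau> (g i) = v i"
    and \<tau>_1: "\<tau> 1 = s"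
begin

lemma length_xs: "length xs = length \<alpha> + length \<beta> + 1"
  by (simp add: xs)

lemma nth1_xs:
  "1 \<le> p \<Longrightarrow> p \<le> length \<alpha> \<Longrightarrow> nth1 xs p = f (nth1 \<alpha> p)"
  "nth1 xs (length \<alpha> + 1) = 1"
  "1 \<le> q \<Longrightarrow> q \<le> length \<beta> \<Longrightarrow> nth1 xs (q + (length \<alpha> + 1)) = g (nth1 \<beta> q)"
  by (auto simp: xs nth1_def nth_append nth_Cons')

lemma Xfac_left_block:
  assumes p: "1 \<le> p" "p \<le> length \<alpha>" and y: "p < length \<alpha> \<or> P y = y"
  shows "Xfac H P (length xs) (nth1 xs) p (\<tau> (nth1 xs p)) y =
    Xfac H P (length \<alpha>) (nth1 \<alpha>) p (u (nth1 \<alpha> p)) y"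
proof -
  have "\<tau> (nth1 xs p) = u (nth1 \<alpha> p)"
    using p by (simp add: nth1_xs \<tau>_f nth1_in_set)
  moreover have "ascent (length xs) (nth1 xs) p \<longleftrightarrow> ascent (length \<alpha>) (nth1 \<alpha>) p"
  proof (cases "p = 1")
    case False
    have "ascent (length xs) (nth1 xs) (p + 0) \<longleftrightarrow> ascent (length \<alpha>) (nth1 \<alpha>) p"
    proof (rule ascent_block)
      show "nth1 xs (q + 0) = f (nth1 \<alpha> q)" if "1 \<le> q" "q \<le> length \<alpha>" for q
        using that by (simp add: nth1_xs)
      show "f i < f j \<longleftrightarrow> i < j" if "i \<in> nth1 \<alpha> ` {1..length \<alpha>}" "j \<in> nth1 \<alpha> ` {1..length \<alpha>}" for i j
        using that f_less_iff nth1_image[of \<alpha>] by blast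
    qed (use p False length_xs in auto)
    then show ?thesis by simp
  qed (simp add: ascent_def)
  moreover have "\<not> last_factor (length xs) p" "p < length \<alpha> \<Longrightarrow> \<not> last_factor (length \<alpha>) p"
    using p by (auto simp: length_xs last_factor_def)
  moreover have "p = length \<alpha> \<Longrightarrow> last_factor (length \<alpha>) p"
    by (simp add: last_factor_def)
  ultimately show ?thesis
    using y by (cases "p < length \<alpha>") (auto simp: Xfac_eq P_if_def)
qed

lemma Xfac_right_block:
  assumes q: "1 \<le> q" "q \<le> length \<beta>"
  shows "Xfac H P (length xs) (nth1 xs) (q + (length \<alpha> + 1)) (\<tau> (nth1 xs (q + (length \<alpha> + 1)))) =
    Xfac H P (length \<beta>) (nth1 \<beta>) q (v (nth1 \<beta> q))"
proof -
  have time: "\<tau> (nth1 xs (q + (length \<alpha> + 1))) = v (nth1 \<beta> q)"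
    using nth1_xs(3)[OF q] \<tau>_g[OF nth1_in_set[OF q]] by simp
  have asc: "ascent (length xs) (nth1 xs) (q + (length \<alpha> + 1)) \<longleftrightarrow> ascent (length \<beta>) (nth1 \<beta>) q"
  proof (cases "q = 1")
    case True
    then show ?thesis
      using nth1_xs(2) nth1_xs(3)[OF q] g_ge[OF nth1_in_set[OF q]] by (simp add: ascent_def)
  next
    case False
    show ?thesis
    proof (rule ascent_block)
      show "nth1 xs (r + (length \<alpha> + 1)) = g (nth1 \<beta> r)" if "1 \<le> r" "r \<le> length \<beta>" for r
        using nth1_xs(3)[OF that] .
      show "g i < g j \<longleftrightarrow> i < j" if "i \<in> nth1 \<beta> ` {1..length \<beta>}" "j \<in> nth1 \<beta> ` {1..length \<beta>}" for i j
        using that g_less_iff nth1_image[of \<beta>] by blast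
    qed (use q False length_xs in auto)
  qed
  have "last_factor (length xs) (q + (length \<alpha> + 1)) \<longleftrightarrow> last_factor (length \<beta>) q"
    using q by (auto simp: length_xs last_factor_def)
  then show ?thesis unfolding time by (rule Xfac_cong[OF asc])
qed

lemma Xfac_middle:
  assumes "length xs \<ge> 2"
  shows "Xfac H P (length xs) (nth1 xs) (length \<alpha> + 1) (\<tau> (nth1 xs (length \<alpha> + 1))) y =
    (if \<alpha> = [] then - imul (H s y - P (H s y))
     else if \<beta> = [] then imul (P (H s (P y))) else imul (P (H s y)))"
proof -
  have "\<tau> (nth1 xs (length \<alpha> + 1)) = s"
    using nth1_xs(2) \<tau>_1 by simp
  moreover have "\<not> ascent (length xs) (nth1 xs) (length \<alpha> + 1)" if "\<alpha> \<noteq> []"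
  proof -
    have "nth1 xs (length \<alpha>) = f (nth1 \<alpha> (length \<alpha>))" "2 \<le> f (nth1 \<alpha> (length \<alpha>))"
      using that by (auto intro!: nth1_xs(1) f_ge nth1_in_set simp: Suc_le_eq)
    then show ?thesis
      using that nth1_xs(2) assms by (simp add: ascent_def)
  qed
  ultimately show ?thesis
    using assms by (auto simp: Xfac_eq P_if_def QP_op_def last_factor_def ascent_def length_xs)
qed

lemma Xprod_Graft:
  assumes n: "length xs \<ge> 2"
  shows "Xprod H P (length xs) (nth1 xs) \<tau> \<psi> = Graft_integrand \<alpha> \<beta> \<psi> s u v"
proof -
  let ?a = "length \<alpha>" and ?b = "length \<beta>" and ?n = "length xs"
  let ?X = "\<lambda>p. Xfac H P ?n (nth1 xs) p (\<tau> (nth1 xs p))"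
  define L where "L = foldr ?X [1..<?a + 1]"
  define R where "R = foldr (\<lambda>q. ?X (q + (?a + 1))) [1..<?b + 1]"
  have "?n = ?a + ?b + 1" by (simp add: length_xs)
  then have prod: "Xprod H P ?n (nth1 xs) \<tau> \<psi> = L (?X (?a + 1) (R \<psi>))"
    unfolding Xprod_def L_def R_def using upt_split_at[of ?a ?b] by (simp add: foldr_map o_def)
  have R: "R = Xprod H P ?b (nth1 \<beta>) v"
    unfolding R_def Xprod_def
    by (intro ext foldr_cong refl) (use Xfac_right_block in auto)
  have L: "L y = Xprod H P ?a (nth1 \<alpha>) u y" if "P y = y" for y
  proof (cases "?a = 0")
    case False
    then have a1: "1 \<le> ?a" by (cases \<alpha>) auto
    then have split: "[1..<?a + 1] = [1..<?a] @ [?a]" by simp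
    have "?X ?a y = Xfac H P ?a (nth1 \<alpha>) ?a (u (nth1 \<alpha> ?a)) y"
      using a1 that by (intro Xfac_left_block) auto
    moreover have "?X p = Xfac H P ?a (nth1 \<alpha>) p (u (nth1 \<alpha> p))" if "p \<in> set [1..<?a]" for p
      using that by (intro ext Xfac_left_block) auto
    ultimately show ?thesis
      unfolding L_def Xprod_def split by (simp, intro foldr_cong) auto
  qed (simp add: L_def Xprod_def)
  have L0: "L = (\<lambda>y. y)" if "\<alpha> = []" using that by (simp add: L_def fun_eq_iff)
  have R0: "R = (\<lambda>y. y)" if "\<beta> = []" using that by (simp add: R_def fun_eq_iff)
  have Pfix: "P (imul (P z)) = imul (P z)" for z by (simp add: P_imul)
  note M = Xfac_middle[OF n]
  show ?thesis
    using M[of \<psi>] M[of "R \<psi>"] by (simp add: prod L L0 R[symmetric] R0 Pfix Graft_integrand_def)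
qed

end

section \<open>Decomposition of \<open>\<Omega>\<^bsub>T\<^sub>1 \<or> T\<^sub>2\<^esub>\<close>\<close>

lemma Xprod_shuffle_word:
  assumes w: "w \<in> shuffle_words (length \<alpha>) (length \<beta>)"
    and \<alpha>: "set \<alpha> = {1..length \<alpha>}" and \<beta>: "set \<beta> = {1..length \<beta>}"
    and n: "length \<alpha> + length \<beta> \<ge> 1"
  shows "Xprod H P (length \<alpha> + length \<beta> + 1)
      (nth1 (map (\<lambda>k. Suc (true_pos w k)) \<alpha> @ [1] @ map (\<lambda>k. Suc (true_pos (map Not w) k)) \<beta>))
      (shift s \<tau>) \<psi>
    = Graft_integrand \<alpha> \<beta> \<psi> s (true_vars w \<tau>) (false_vars w \<tau>)"
proof -
  have counts: "count_list w True = length \<alpha>" "count_list (map Not w) True = length \<beta>"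
    using w by (simp_all add: shuffle_words_iff count_list_map_Not)
  have pos: "true_pos v i \<ge> 1" if "i \<in> {1..count_list v True}" for v i
    using true_pos_in_true_positions[of i v] that by (auto simp: true_positions_def)
  let ?xs = "map (\<lambda>k. Suc (true_pos w k)) \<alpha> @ [1] @ map (\<lambda>k. Suc (true_pos (map Not w) k)) \<beta>"
  have "Xprod H P (length ?xs) (nth1 ?xs) (shift s \<tau>) \<psi>
      = Graft_integrand \<alpha> \<beta> \<psi> s (true_vars w \<tau>) (false_vars w \<tau>)"
  proof (rule Xprod_Graft)
    show "Suc (true_pos w i) < Suc (true_pos w j) \<longleftrightarrow> i < j" if "i \<in> set \<alpha>" "j \<in> set \<alpha>" for i j
      using strict_mono_on_less[OF true_pos_strict_mono, of i w j] that \<alpha> counts by simp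
    show "Suc (true_pos (map Not w) i) < Suc (true_pos (map Not w) j) \<longleftrightarrow> i < j"
      if "i \<in> set \<beta>" "j \<in> set \<beta>" for i j
      using strict_mono_on_less[OF true_pos_strict_mono, of i "map Not w" j] that \<beta> counts by simp
    show "2 \<le> Suc (true_pos w i)" if "i \<in> set \<alpha>" for i
      using pos[of i w] that \<alpha> counts by simp
    show "2 \<le> Suc (true_pos (map Not w) i)" if "i \<in> set \<beta>" for i
      using pos[of i "map Not w"] that \<beta> counts by simp
    show "shift s \<tau> (Suc (true_pos w i)) = true_vars w \<tau> i" if "i \<in> set \<alpha>" for i
      using pos[of i w] true_vars_eq_true_pos[of i w \<tau>] that \<alpha> counts by (simp add: shift_def)
    show "shift s \<tau> (Suc (true_pos (map Not w) i)) = false_vars w \<tau> i" if "i \<in> set \<beta>" for i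
      using pos[of i "map Not w"] false_vars_eq_true_pos[of i w \<tau>] that \<beta> counts
      by (simp add: shift_def count_list_map_Not)
    show "shift s \<tau> 1 = s" by (simp add: shift_def)
    show "2 \<le> length ?xs" using n by simp
  qed (rule refl)
  then show ?thesis by simp
qed

lemma Omega_eq_sum_arrangements:
  assumes "T \<noteq> Leaf"
  shows "Omega H P T t t0 \<psi> =
    (\<Sum>xs\<in>arrangements T {1..tsize T}. iint (tsize T) t0 t (\<lambda>\<tau>. Xprod H P (tsize T) (nth1 xs) \<tau> \<psi>))"
proof -
  let ?n = "tsize T"
  have "Xprod H P ?n \<sigma> = Xprod H P ?n (nth1 (map \<sigma> [1..<?n + 1]))" for \<sigma>
    by (rule Xprod_cong) (metis nth1_upt)
  then show ?thesis
    using assms sum.reindex_bij_betw[OF bij_betw_S_T_arrangements,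
        of "\<lambda>xs. iint ?n t0 t (\<lambda>\<tau>. Xprod H P ?n (nth1 xs) \<tau> \<psi>)" T]
    by (simp add: Omega_def)
qed

lemma continuous_on_Omega:
  assumes "T \<noteq> Leaf" and h: "continuous_on UNIV h"
  shows "continuous_on UNIV (\<lambda>s. Omega H P T s t0 (h s))"
proof -
  have "continuous_on UNIV (\<lambda>(s, u). Xprod H P (tsize T) (nth1 xs) u (h s))" for xs
    unfolding split_beta
    by (intro continuous_on_Xprod_comp continuous_on_snd_id continuous_on_compose_UNIV[OF h]
        continuous_on_fst_id)
  from continuous_on_iint[OF this continuous_on_id]
  show ?thesis unfolding Omega_eq_sum_arrangements[OF assms(1)] by (intro continuous_on_sum)
qed

lemma continuous_on_Graft_integrand: "continuous_on UNIV (\<lambda>(u, v). Graft_integrand \<alpha> \<beta> \<psi> s u v)"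
proof -
  have bl: "bounded_linear (\<lambda>y. - imul (H s y - P (H s y)))" "bounded_linear (\<lambda>y. imul (P (H s y)))"
    by (intro bounded_linear_minus bounded_linear_sub bounded_linear_compose[OF bounded_linear_imul]
        bounded_linear_compose[OF bounded_linear_P] bounded_linear_H)+
  have cont_\<beta>: "continuous_on UNIV (\<lambda>z. Xprod H P (length \<beta>) (nth1 \<beta>) (snd z) \<psi>)"
    by (intro continuous_on_Xprod_comp continuous_on_snd_id continuous_on_const)
  have "continuous_on UNIV (\<lambda>z. Xprod H P (length \<alpha>) (nth1 \<alpha>) (fst z) (imul (P (H s (P \<psi>)))))"
    "continuous_on UNIV (\<lambda>z. Xprod H P (length \<alpha>) (nth1 \<alpha>) (fst z)
        (imul (P (H s (Xprod H P (length \<beta>) (nth1 \<beta>) (snd z) \<psi>)))))"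
    by (intro continuous_on_Xprod_comp continuous_on_fst_id continuous_on_const
        bounded_linear.continuous_on[OF bl(2) cont_\<beta>])+
  then show ?thesis
    using bounded_linear.continuous_on[OF bl(1) cont_\<beta>]
    by (cases "\<alpha> = []"; cases "\<beta> = []") (simp_all add: Graft_integrand_def split_beta)
qed

lemma sum_arrangements_shuffle_word:
  assumes w: "w \<in> shuffle_words (tsize T1) (tsize T2)" and ab: "tsize T1 + tsize T2 \<ge> 1"
  defines "a \<equiv> tsize T1" and "b \<equiv> tsize T2"
  shows "(\<Sum>ys\<in>arrangements T1 (Suc ` true_positions w).
      \<Sum>zs\<in>arrangements T2 (Suc ` ({1..a + b} - true_positions w)).
        iint (a + b) t0 s (\<lambda>\<tau>. Xprod H P (a + b + 1) (nth1 (ys @ [1] @ zs)) (shift s \<tau>) \<psi>))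
    = (\<Sum>\<alpha>\<in>arrangements T1 {1..a}. \<Sum>\<beta>\<in>arrangements T2 {1..b}.
        iint (a + b) t0 s (\<lambda>\<tau>. Graft_integrand \<alpha> \<beta> \<psi> s (true_vars w \<tau>) (false_vars w \<tau>)))"
proof -
  have counts: "count_list w True = a" "count_list (map Not w) True = b"
    using w by (auto simp: a_def b_def shuffle_words_iff count_list_map_Not)
  let ?f = "\<lambda>k. Suc (true_pos w k)" and ?g = "\<lambda>k. Suc (true_pos (map Not w) k)"
  have mono: "strict_mono_on {1..a} ?f" "strict_mono_on {1..b} ?g"
    using true_pos_strict_mono[of w] true_pos_strict_mono[of "map Not w"] counts
    by (auto simp: strict_mono_on_def)
  have "length w = a + b"
    using w length_eq_count_True_False[of w] by (simp add: a_def b_def shuffle_words_iff)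
  then have im: "Suc ` true_positions w = ?f ` {1..a}" "Suc ` ({1..a + b} - true_positions w) = ?g ` {1..b}"
    using true_pos_image[of w] true_pos_image[of "map Not w"] counts
    by (auto simp: true_positions_map_Not image_image)
  have pointwise: "Xprod H P (a + b + 1) (nth1 (map ?f \<alpha> @ [1] @ map ?g \<beta>)) (shift s \<tau>) \<psi> =
      Graft_integrand \<alpha> \<beta> \<psi> s (true_vars w \<tau>) (false_vars w \<tau>)"
    if "\<alpha> \<in> arrangements T1 {1..a}" "\<beta> \<in> arrangements T2 {1..b}" for \<alpha> \<beta> \<tau>
  proof -
    have "length \<alpha> = a" "length \<beta> = b" "set \<alpha> = {1..a}" "set \<beta> = {1..b}"
      using that length_arrangements by (auto simp: a_def b_def arrangements_def)
    then show ?thesis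
      using Xprod_shuffle_word[of w \<alpha> \<beta>] w ab by (simp add: a_def b_def)
  qed
  show ?thesis
    unfolding im sum_arrangements_image[OF mono(1)] sum_arrangements_image[OF mono(2)]
    by (intro sum.cong refl) (use pointwise in simp)
qed

lemma sum_arrangements_Graft_shift:
  fixes T1 T2 defines "a \<equiv> tsize T1" and "b \<equiv> tsize T2"
  assumes ab: "a + b \<ge> 1"
  shows "(\<Sum>xs\<in>arrangements (Graft T1 T2) {1..a + b + 1}.
      iint (a + b) t0 s (\<lambda>\<tau>. Xprod H P (a + b + 1) (nth1 xs) (shift s \<tau>) \<psi>))
    = (\<Sum>\<alpha>\<in>arrangements T1 {1..a}. \<Sum>\<beta>\<in>arrangements T2 {1..b}.
      iint a t0 s (\<lambda>u. iint b t0 s (Graft_integrand \<alpha> \<beta> \<psi> s u)))"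
proof -
  define \<Phi> where "\<Phi> xs = iint (a + b) t0 s (\<lambda>\<tau>. Xprod H P (a + b + 1) (nth1 xs) (shift s \<tau>) \<psi>)" for xs
  define G where "G w \<alpha> \<beta> = iint (a + b) t0 s (\<lambda>\<tau>. Graft_integrand \<alpha> \<beta> \<psi> s (true_vars w \<tau>) (false_vars w \<tau>))"
    for w \<alpha> \<beta>
  have "{1..a + b + 1} - {1} = Suc ` {1..a + b}"
    by (auto simp: image_iff intro: bexI[of _ "x - 1" for x])
  then have "(\<Sum>xs\<in>arrangements (Graft T1 T2) {1..a + b + 1}. \<Phi> xs) =
      (\<Sum>Y\<in>Pow (Suc ` {1..a + b}). \<Sum>ys\<in>arrangements T1 Y.
        \<Sum>zs\<in>arrangements T2 (Suc ` {1..a + b} - Y). \<Phi> (ys @ [1] @ zs))"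
    using sum_arrangements_Graft[where V = "{1..a + b + 1}" and m = 1 and F = \<Phi>] by simp
  also have "\<dots> = (\<Sum>Y\<in>Pow {1..a + b}. \<Sum>ys\<in>arrangements T1 (Suc ` Y).
      \<Sum>zs\<in>arrangements T2 (Suc ` ({1..a + b} - Y)). \<Phi> (ys @ [1] @ zs))"
    by (simp only: sum_Pow_image[OF inj_Suc[of UNIV]] image_set_diff[OF inj_Suc[of UNIV]])
  also have "\<dots> = (\<Sum>w\<in>shuffle_words a b. \<Sum>ys\<in>arrangements T1 (Suc ` true_positions w).
      \<Sum>zs\<in>arrangements T2 (Suc ` ({1..a + b} - true_positions w)). \<Phi> (ys @ [1] @ zs))"
    by (rule sum_Pow_eq_sum_shuffle_words) (simp add: a_def card_image arrangements_eq_empty)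
  also have "\<dots> = (\<Sum>w\<in>shuffle_words a b. \<Sum>\<alpha>\<in>arrangements T1 {1..a}.
      \<Sum>\<beta>\<in>arrangements T2 {1..b}. G w \<alpha> \<beta>)"
    unfolding \<Phi>_def G_def a_def b_def
    by (intro sum.cong refl sum_arrangements_shuffle_word) (use ab in \<open>simp_all add: a_def b_def\<close>)
  also have "\<dots> = (\<Sum>\<alpha>\<in>arrangements T1 {1..a}. \<Sum>\<beta>\<in>arrangements T2 {1..b}.
      \<Sum>w\<in>shuffle_words a b. G w \<alpha> \<beta>)"
    by (subst sum.swap) (simp add: sum.swap[of _ "shuffle_words a b"])
  also have "\<dots> = (\<Sum>\<alpha>\<in>arrangements T1 {1..a}. \<Sum>\<beta>\<in>arrangements T2 {1..b}.
      iint a t0 s (\<lambda>u. iint b t0 s (Graft_integrand \<alpha> \<beta> \<psi> s u)))"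
    unfolding G_def by (intro sum.cong refl iint_shuffle_product continuous_on_Graft_integrand)
  finally show ?thesis by (simp add: \<Phi>_def)
qed

lemma Omega_Graft:
  assumes "tsize T1 + tsize T2 \<ge> 1"
  shows "Omega H P (Graft T1 T2) t t0 \<psi> = oint t0 t (\<lambda>s.
    \<Sum>\<alpha>\<in>arrangements T1 {1..tsize T1}. \<Sum>\<beta>\<in>arrangements T2 {1..tsize T2}.
      iint (tsize T1) t0 s (\<lambda>u. iint (tsize T2) t0 s (Graft_integrand \<alpha> \<beta> \<psi> s u)))"
proof -
  let ?n = "tsize T1 + tsize T2 + 1" and ?A = "arrangements (Graft T1 T2) {1..tsize T1 + tsize T2 + 1}"
  have cont: "continuous_on UNIV (\<lambda>\<tau>. Xprod H P ?n (nth1 xs) \<tau> \<psi>)" for xs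
    by (intro continuous_on_Xprod_comp continuous_on_id continuous_on_const)
  have "Omega H P (Graft T1 T2) t t0 \<psi> =
      (\<Sum>xs\<in>?A. oint t0 t (\<lambda>s. iint (?n - 1) t0 s (\<lambda>\<tau>. Xprod H P ?n (nth1 xs) (shift s \<tau>) \<psi>)))"
    by (simp add: Omega_eq_sum_arrangements iint_Suc_shift del: iint.simps)
  also have "\<dots> = oint t0 t (\<lambda>s. \<Sum>xs\<in>?A. iint (?n - 1) t0 s (\<lambda>\<tau>. Xprod H P ?n (nth1 xs) (shift s \<tau>) \<psi>))"
    by (rule oint_sum[symmetric]) (simp add: finite_arrangements, rule continuous_on_iint_shift[OF cont])
  finally show ?thesis
    using sum_arrangements_Graft_shift[OF assms] by simp
qed

lemma imul_Omega:
  assumes "T \<noteq> Leaf"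
  shows "imul (Omega H P T s t0 y) =
    (\<Sum>\<alpha>\<in>arrangements T {1..tsize T}. iint (tsize T) t0 s (\<lambda>u. Xprod H P (tsize T) (nth1 \<alpha>) u (imul (P y))))"
proof -
  have "tsize T \<ge> 1" using tsize_ge_1[OF assms] .
  then show ?thesis
    unfolding Omega_eq_sum_arrangements[OF assms] imul_sum
    by (simp add: iint_linear[OF bounded_linear_imul] continuous_on_Xprod_comp continuous_on_id
        continuous_on_const imul_Xprod)
qed

lemma bounded_linear_Omega:
  assumes "T \<noteq> Leaf" and K: "bounded_linear K"
  shows "K (Omega H P T s t0 \<psi>) =
    (\<Sum>\<beta>\<in>arrangements T {1..tsize T}. iint (tsize T) t0 s (\<lambda>v. K (Xprod H P (tsize T) (nth1 \<beta>) v \<psi>)))"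
  unfolding Omega_eq_sum_arrangements[OF assms(1)] linear_sum[OF bounded_linear.linear[OF K]]
  by (simp add: iint_linear[OF K] continuous_on_Xprod_comp continuous_on_id continuous_on_const)

lemma Omega_Graft_Leaf_left:
  assumes "T2 \<noteq> Leaf"
  shows "Omega H P (Graft Leaf T2) t t0 \<psi> =
    - imul (oint t0 t (\<lambda>s. H s (Omega H P T2 s t0 \<psi>) - P (H s (Omega H P T2 s t0 \<psi>))))"
proof -
  have "continuous_on UNIV (\<lambda>s. Omega H P T2 s t0 \<psi>)"
    by (rule continuous_on_Omega[OF assms continuous_on_const])
  then have cont: "continuous_on UNIV (\<lambda>s. H s (Omega H P T2 s t0 \<psi>) - P (H s (Omega H P T2 s t0 \<psi>)))"
    by (intro continuous_intros continuous_on_H_comp continuous_on_id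
        bounded_linear.continuous_on[OF bounded_linear_P])
  define K where "K s y = - imul (H s y - P (H s y))" for s y
  have K: "bounded_linear (K s)" for s
    unfolding K_def
    by (intro bounded_linear_minus bounded_linear_sub bounded_linear_compose[OF bounded_linear_imul]
        bounded_linear_compose[OF bounded_linear_P] bounded_linear_H)
  have "Graft_integrand [] \<beta> \<psi> s (\<lambda>_. 0) = (\<lambda>v. K s (Xprod H P (tsize T2) (nth1 \<beta>) v \<psi>))"
    if "\<beta> \<in> arrangements T2 {1..tsize T2}" for \<beta> s
    using length_arrangements[OF that] by (simp add: Graft_integrand_def K_def fun_eq_iff)
  moreover have "tsize T2 \<ge> 1" using tsize_ge_1[OF assms] .
  ultimately have "Omega H P (Graft Leaf T2) t t0 \<psi> = oint t0 t (\<lambda>s. K s (Omega H P T2 s t0 \<psi>))"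
    by (simp add: Omega_Graft bounded_linear_Omega[OF assms K] arrangements_Leaf)
  also have "\<dots> = oint t0 t (\<lambda>s. - imul (H s (Omega H P T2 s t0 \<psi>) - P (H s (Omega H P T2 s t0 \<psi>))))"
    by (simp add: K_def)
  also have "\<dots> = - imul (oint t0 t (\<lambda>s. H s (Omega H P T2 s t0 \<psi>) - P (H s (Omega H P T2 s t0 \<psi>))))"
    by (rule oint_linear[OF bounded_linear_minus[OF bounded_linear_imul] cont, symmetric])
  finally show ?thesis .
qed

lemma Omega_Graft_Leaf_right:
  assumes "T1 \<noteq> Leaf"
  shows "Omega H P (Graft T1 Leaf) t t0 \<psi> = imul (oint t0 t (\<lambda>s. Omega H P T1 s t0 (H s (P \<psi>))))"
proof -
  have cont: "continuous_on UNIV (\<lambda>s. Omega H P T1 s t0 (H s (P \<psi>)))"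
    using H_cont by (intro continuous_on_Omega[OF assms]) simp
  have a: "tsize T1 \<ge> 1" using tsize_ge_1[OF assms] .
  have "Graft_integrand \<alpha> [] \<psi> s u (\<lambda>_. 0) = Xprod H P (tsize T1) (nth1 \<alpha>) u (imul (P (H s (P \<psi>))))"
    if "\<alpha> \<in> arrangements T1 {1..tsize T1}" for \<alpha> s u
    using length_arrangements[OF that] a by (auto simp: Graft_integrand_def)
  with a have "Omega H P (Graft T1 Leaf) t t0 \<psi> = oint t0 t (\<lambda>s. imul (Omega H P T1 s t0 (H s (P \<psi>))))"
    by (simp add: Omega_Graft imul_Omega[OF assms] arrangements_Leaf)
  also have "\<dots> = imul (oint t0 t (\<lambda>s. Omega H P T1 s t0 (H s (P \<psi>))))"
    by (rule oint_linear[OF bounded_linear_imul cont, symmetric])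
  finally show ?thesis .
qed

lemma imul_Omega_Omega:
  assumes T1: "T1 \<noteq> Leaf" and T2: "T2 \<noteq> Leaf"
  shows "imul (Omega H P T1 s t0 (H s (Omega H P T2 s t0 \<psi>))) =
    (\<Sum>\<alpha>\<in>arrangements T1 {1..tsize T1}. \<Sum>\<beta>\<in>arrangements T2 {1..tsize T2}.
      iint (tsize T1) t0 s (\<lambda>u. iint (tsize T2) t0 s (Graft_integrand \<alpha> \<beta> \<psi> s u)))"
proof -
  let ?a = "tsize T1" and ?b = "tsize T2"
  let ?A = "arrangements T1 {1..?a}" and ?B = "arrangements T2 {1..?b}"
  define K where "K y = imul (P (H s y))" for y
  have K: "bounded_linear K"
    unfolding K_def
    by (intro bounded_linear_compose[OF bounded_linear_imul] bounded_linear_compose[OF bounded_linear_P]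
        bounded_linear_H)
  define F where "F \<alpha> \<beta> u = (\<lambda>v. Xprod H P ?a (nth1 \<alpha>) u (K (Xprod H P ?b (nth1 \<beta>) v \<psi>)))"
    for \<alpha> \<beta> u
  have cont_F: "continuous_on UNIV (\<lambda>(u, v). F \<alpha> \<beta> u v)" for \<alpha> \<beta>
    unfolding F_def split_beta
    by (intro continuous_on_Xprod_comp continuous_on_fst_id continuous_on_snd_id continuous_on_const
        bounded_linear.continuous_on[OF K])
  have "Xprod H P ?a (nth1 \<alpha>) u (K (Omega H P T2 s t0 \<psi>)) = (\<Sum>\<beta>\<in>?B. iint ?b t0 s (F \<alpha> \<beta> u))"
    for \<alpha> u
    unfolding bounded_linear_Omega[OF T2 K] linear_sum[OF bounded_linear.linear[OF bounded_linear_Xprod]]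
    by (simp add: F_def iint_linear[OF bounded_linear_Xprod] bounded_linear.continuous_on[OF K]
        continuous_on_Xprod_comp continuous_on_id continuous_on_const)
  then have "imul (Omega H P T1 s t0 (H s (Omega H P T2 s t0 \<psi>))) =
      (\<Sum>\<alpha>\<in>?A. \<Sum>\<beta>\<in>?B. iint ?a t0 s (\<lambda>u. iint ?b t0 s (F \<alpha> \<beta> u)))"
    by (simp add: imul_Omega[OF T1] K_def[symmetric] iint_sum finite_arrangements
        continuous_on_iint[OF cont_F continuous_on_const])
  moreover have "Graft_integrand \<alpha> \<beta> \<psi> s u = F \<alpha> \<beta> u" if "\<alpha> \<in> ?A" "\<beta> \<in> ?B" for \<alpha> \<beta> u
    using length_arrangements[OF that(1)] length_arrangements[OF that(2)] tsize_ge_1[OF T1] tsize_ge_1[OF T2]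
    by (auto simp: Graft_integrand_def F_def K_def fun_eq_iff)
  ultimately show ?thesis by simp
qed

lemma Omega_Graft_Graft:
  assumes T1: "T1 \<noteq> Leaf" and T2: "T2 \<noteq> Leaf"
  shows "Omega H P (Graft T1 T2) t t0 \<psi> =
    imul (oint t0 t (\<lambda>s. Omega H P T1 s t0 (H s (Omega H P T2 s t0 \<psi>))))"
proof -
  have "tsize T1 + tsize T2 \<ge> 1" using tsize_ge_1[OF T1] by simp
  then have "Omega H P (Graft T1 T2) t t0 \<psi> =
      oint t0 t (\<lambda>s. imul (Omega H P T1 s t0 (H s (Omega H P T2 s t0 \<psi>))))"
    by (simp add: Omega_Graft imul_Omega_Omega[OF T1 T2])
  also have "\<dots> = imul (oint t0 t (\<lambda>s. Omega H P T1 s t0 (H s (Omega H P T2 s t0 \<psi>))))"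
    by (intro oint_linear[OF bounded_linear_imul, symmetric] continuous_on_Omega[OF T1]
        continuous_on_H_comp continuous_on_id continuous_on_Omega[OF T2] continuous_on_const)
  finally show ?thesis .
qed

end

theorem theorem2:
  fixes H :: "real \<Rightarrow> 'a::complex_hilbert \<Rightarrow> 'a"
    and P :: "'a \<Rightarrow> 'a"
    and t0 :: real
    and T T1 T2 :: tree
  assumes H_sa: "\<forall>t. bounded_selfadjoint (H t)"
    and H_cont: "\<forall>\<psi>. continuous_on UNIV (\<lambda>t. H t \<psi>)"
    and P_proj: "orth_projection P"
    and T_size: "tsize T > 1"
    and T_split: "T = Graft T1 T2"
  shows
    "(T1 = Leaf \<longrightarrow> (\<forall>t \<psi>. Omega H P T t t0 \<psi> =
        - imul (oint t0 t (\<lambda>s. H s (Omega H P T2 s t0 \<psi>) - P (H s (Omega H P T2 s t0 \<psi>))))))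
   \<and> (T2 = Leaf \<longrightarrow> (\<forall>t \<psi>. Omega H P T t t0 \<psi> =
        imul (oint t0 t (\<lambda>s. Omega H P T1 s t0 (H s (P \<psi>))))))
   \<and> (T1 \<noteq> Leaf \<and> T2 \<noteq> Leaf \<longrightarrow> (\<forall>t \<psi>. Omega H P T t t0 \<psi> =
        imul (oint t0 t (\<lambda>s. Omega H P T1 s t0 (H s (Omega H P T2 s t0 \<psi>))))))"
proof -
  interpret hamiltonian_projection H P
    using H_sa H_cont P_proj by unfold_locales
  have "T1 = Leaf \<Longrightarrow> T2 \<noteq> Leaf" "T2 = Leaf \<Longrightarrow> T1 \<noteq> Leaf"
    using T_size T_split by auto
  then show ?thesis
    using T_split Omega_Graft_Leaf_left Omega_Graft_Leaf_right Omega_Graft_Graft by blast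
qed

end
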